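(* Let $R$ be a commutative ring of Krull dimension $0$ which is integral over an Artinian subring $R_0$, write $\mathcal{F}=\mathcal{F}(R_0,R)$, and let $n\ge 1$. If $R$ is not Noetherian, then the ring of Artinian power series $S=\mathcal{F}\llbracket X_1,\ldots,X_n\rrbracket$ is not Noetherian, and $S$ is strictly contained in the formal power series ring $R\llbracket X_1,\ldots,X_n\rrbracket$.
   Context: All rings are commutative with identity, and subrings share the identity. For a $0$-dimensional ring $R$ and an Artinian subring $R_0\subseteq R$ such that $R$ is integral over $R_0$, let $\mathcal{F}(R_0,R)=\{R_\alpha\}$ denote the family of all subrings of $R$ that are finitely generated as $R_0$-algebras; this family is directed, each $R_\alpha$ is Artinian, and $R=\bigcup_\alpha R_\alpha$. The ring of Artinian power series $\mathcal{F}\llbracket X_1,\ldots,X_n\rrbracket$ is the set of all $f\in R\llbracket X_1,\ldots,X_n\rrbracket$ such that all coefficients of $f$ lie in a single $R_\alpha\in\mathcal{F}$; equivalently, $\mathcal{F}\llbracket X_1,\ldots,X_n\rrbracket=\bigcup_\alpha R_\alpha\llbracket X_1,\ldots,X_n\rrbracket$, which is a subring of $R\llbracket X_1,\ldots,X_n\rrbracket$. *)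

theory Defs
  imports "HOL-Algebra.Algebra"
begin

text \<open>Noetherian: ascending chain condition on ideals.  The ring axioms are
  implicit in the notion of ideal (the locale ideal contains ring R).\<close>
definition noetherian :: "('a, 'b) ring_scheme \<Rightarrow> bool" where
  "noetherian R \<longleftrightarrow>
     (\<forall>I :: nat \<Rightarrow> 'a set. (\<forall>k. ideal (I k) R) \<and> (\<forall>k. I k \<subseteq> I (Suc k))
        \<longrightarrow> (\<exists>m. \<forall>k\<ge>m. I k = I m))"

definition artinian :: "('a, 'b) ring_scheme \<Rightarrow> bool" where
  "artinian R \<longleftrightarrow> ring R \<and>
     (\<forall>I :: nat \<Rightarrow> 'a set. (\<forall>k. ideal (I k) R) \<and> (\<forall>k. I (Suc k) \<subseteq> I k)
        \<longrightarrow> (\<exists>m. \<forall>k\<ge>m. I k = I m))"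

definition krull_dim_zero :: "('a, 'b) ring_scheme \<Rightarrow> bool" where
  "krull_dim_zero R \<longleftrightarrow> (\<exists>P. primeideal P R) \<and> (\<forall>P. primeideal P R \<longrightarrow> maximalideal P R)"

definition integral_over :: "('a, 'b) ring_scheme \<Rightarrow> 'a set \<Rightarrow> bool" where
  "integral_over R R0 \<longleftrightarrow>
     (\<forall>x\<in>carrier R. \<exists>(d::nat) c. (\<forall>i<d. c i \<in> R0) \<and>
        x [^]\<^bsub>R\<^esub> d \<oplus>\<^bsub>R\<^esub> (\<Oplus>\<^bsub>R\<^esub> i\<in>{..<d}. c i \<otimes>\<^bsub>R\<^esub> x [^]\<^bsub>R\<^esub> i) = \<zero>\<^bsub>R\<^esub>)"

definition fg_family :: "('a, 'b) ring_scheme \<Rightarrow> 'a set \<Rightarrow> 'a set set" where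
  "fg_family R R0 = {generate_ring R (R0 \<union> E) | E. finite E \<and> E \<subseteq> carrier R}"

text \<open>Exponent vectors of monomials in the variables X_1..X_n (indexed 0..n-1).\<close>
definition expvec :: "nat \<Rightarrow> (nat \<Rightarrow> nat) set" where
  "expvec n = {m. \<forall>i\<ge>n. m i = 0}"

definition PS :: "('a, 'b) ring_scheme \<Rightarrow> nat \<Rightarrow> ((nat \<Rightarrow> nat) \<Rightarrow> 'a) ring" where
  "PS R n = \<lparr>
     carrier = {f. (\<forall>m. f m \<in> carrier R) \<and> (\<forall>m. m \<notin> expvec n \<longrightarrow> f m = \<zero>\<^bsub>R\<^esub>)},
     monoid.mult = (\<lambda>f g m. if m \<in> expvec n then
         (\<Oplus>\<^bsub>R\<^esub> a\<in>{a. \<forall>i. a i \<le> m i}. f a \<otimes>\<^bsub>R\<^esub> g (\<lambda>i. m i - a i))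
       else \<zero>\<^bsub>R\<^esub>),
     monoid.one = (\<lambda>m. if (\<forall>i. m i = 0) then \<one>\<^bsub>R\<^esub> else \<zero>\<^bsub>R\<^esub>),
     ring.zero = (\<lambda>m. \<zero>\<^bsub>R\<^esub>),
     ring.add = (\<lambda>f g m. f m \<oplus>\<^bsub>R\<^esub> g m) \<rparr>"

definition artinian_PS :: "('a, 'b) ring_scheme \<Rightarrow> 'a set \<Rightarrow> nat \<Rightarrow> ((nat \<Rightarrow> nat) \<Rightarrow> 'a) set" where
  "artinian_PS R R0 n =
     (\<Union>Ra\<in>fg_family R R0. {f \<in> carrier (PS R n). \<forall>m. f m \<in> Ra})"

end

theory Submission
  imports Defs
begin

text \<open>
  The Artinian ring \<open>R\<^sub>0\<close> is Noetherian (Akizuki--Hopkins): a minimal product of maximal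
  ideals is absorbed by every maximal ideal and hence is zero, and each step of the chain of
  products down to zero is a vector space over a residue field, on which DCC forces ACC.
  By integrality every finitely generated \<open>R\<^sub>0\<close>-subalgebra \<open>R\<^sub>\<alpha>\<close> lies in a finitely
  generated \<open>R\<^sub>0\<close>-module, so for every ascending chain \<open>I\<^sub>k\<close> of ideals of \<open>R\<close> the traces
  \<open>I\<^sub>k \<inter> R\<^sub>\<alpha>\<close> stabilize. If \<open>R\<close> is not Noetherian, choose a chain that does not stabilize and
  \<open>s\<^sub>m \<in> (\<Union>k. I\<^sub>k) - I\<^sub>m\<close>: the coefficients of \<open>\<Sum> s\<^sub>m X\<^sub>1\<^sup>m\<close> lie in no single \<open>R\<^sub>\<alpha>\<close>, so
  \<open>S \<noteq> R\<lbrakk>X\<^sub>1, \<dots>, X\<^sub>n\<rbrakk>\<close>. Finally, the constant term is a surjective ring homomorphism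
  \<open>S \<rightarrow> R\<close>, and Noetherianity passes to surjective images, so \<open>S\<close> is not Noetherian.
\<close>

section \<open>The power series ring\<close>

lemma expvec_le: "m \<in> expvec n \<Longrightarrow> a \<le> m \<Longrightarrow> a \<in> expvec n"
  by (auto simp: expvec_def le_fun_def) (metis le_zero_eq)

lemma expvec_diff: "m \<in> expvec n \<Longrightarrow> m - a \<in> expvec n"
  by (simp add: expvec_def)

lemma zero_expvec [simp]: "(\<lambda>i. 0) \<in> expvec n"
  by (simp add: expvec_def)

lemma finite_atMost_expvec:
  assumes "m \<in> expvec n"
  shows "finite {..m}"
proof -
  have "inj_on (\<lambda>a. restrict a {..<n}) {..m}"
  proof (rule inj_onI, rule ext)
    fix a b i assume "a \<in> {..m}" "b \<in> {..m}" and eq: "restrict a {..<n} = restrict b {..<n}"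
    show "a i = b i"
    proof (cases "i < n")
      case True
      then show ?thesis
        using fun_cong[OF eq, of i] by simp
    next
      case False
      then have "m i = 0"
        using assms by (simp add: expvec_def)
      then show ?thesis
        using \<open>a \<in> {..m}\<close> \<open>b \<in> {..m}\<close> by (simp add: le_fun_def) (metis le_zero_eq)
    qed
  qed
  moreover have "(\<lambda>a. restrict a {..<n}) ` {..m} \<subseteq> (\<Pi>\<^sub>E i\<in>{..<n}. {..m i})"
  proof (rule image_subsetI, rule PiE_I)
    fix a i assume "a \<in> {..m}"
    then show "i \<in> {..<n} \<Longrightarrow> restrict a {..<n} i \<in> {..m i}"
      by (simp add: le_fun_def)
  qed simp
  ultimately show ?thesis
    by (meson finite_PiE finite_atMost finite_imageD finite_lessThan finite_subset)
qed

lemma atMost_fun_eq: "{..m} = {a. \<forall>i. a i \<le> m i}"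
  by (auto simp: le_fun_def)

lemma PS_carrier:
  "f \<in> carrier (PS R n) \<longleftrightarrow> (\<forall>m. f m \<in> carrier R) \<and> (\<forall>m. m \<notin> expvec n \<longrightarrow> f m = \<zero>\<^bsub>R\<^esub>)"
  by (simp add: PS_def)

lemma PS_mult:
  "f \<otimes>\<^bsub>PS R n\<^esub> g =
     (\<lambda>m. if m \<in> expvec n then \<Oplus>\<^bsub>R\<^esub> a\<in>{..m}. f a \<otimes>\<^bsub>R\<^esub> g (m - a) else \<zero>\<^bsub>R\<^esub>)"
  unfolding PS_def fun_diff_def atMost_fun_eq by simp

lemma PS_one: "\<one>\<^bsub>PS R n\<^esub> = (\<lambda>m. if m = (\<lambda>i. 0) then \<one>\<^bsub>R\<^esub> else \<zero>\<^bsub>R\<^esub>)"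
  by (simp add: PS_def fun_eq_iff)

lemma PS_zero: "\<zero>\<^bsub>PS R n\<^esub> = (\<lambda>m. \<zero>\<^bsub>R\<^esub>)"
  by (simp add: PS_def)

lemma PS_add: "f \<oplus>\<^bsub>PS R n\<^esub> g = (\<lambda>m. f m \<oplus>\<^bsub>R\<^esub> g m)"
  by (simp add: PS_def)

lemma bij_betw_add_split:
  fixes m :: "nat \<Rightarrow> nat"
  shows "bij_betw (\<lambda>(b, c). (\<lambda>i. b i + c i, b)) (SIGMA b:{..m}. {..m - b}) (SIGMA a:{..m}. {..a})"
proof (rule bij_betw_byWitness[where f' = "\<lambda>(a, b). (b, a - b)"])
  show "\<forall>p\<in>SIGMA b:{..m}. {..m - b}. (\<lambda>(a, b). (b, a - b)) ((\<lambda>(b, c). (\<lambda>i. b i + c i, b)) p) = p"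
    by (auto simp: fun_eq_iff)
  show "\<forall>p\<in>SIGMA a:{..m}. {..a}. (\<lambda>(b, c). (\<lambda>i. b i + c i, b)) ((\<lambda>(a, b). (b, a - b)) p) = p"
    by (auto simp: fun_eq_iff le_fun_def)
  show "(\<lambda>(b, c). (\<lambda>i. b i + c i, b)) ` (SIGMA b:{..m}. {..m - b}) \<subseteq> (SIGMA a:{..m}. {..a})"
    by (clarsimp simp: le_fun_def) (metis add.commute le_diff_conv2)
  show "(\<lambda>(a, b). (b, a - b)) ` (SIGMA a:{..m}. {..a}) \<subseteq> (SIGMA b:{..m}. {..m - b})"
    by (clarsimp simp: le_fun_def) (meson diff_le_mono order_trans)
qed

lemma bij_betw_diff_atMost:
  fixes m :: "nat \<Rightarrow> nat"
  shows "bij_betw (\<lambda>a. m - a) {..m} {..m}"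
  by (rule bij_betw_byWitness[where f' = "\<lambda>a. m - a"]) (auto simp: fun_eq_iff le_fun_def)

lemma (in abelian_monoid) finsum_Sigma:
  assumes "finite A" "\<And>x. x \<in> A \<Longrightarrow> finite (B x)"
    and "\<And>x y. x \<in> A \<Longrightarrow> y \<in> B x \<Longrightarrow> H x y \<in> carrier G"
  shows "(\<Oplus>x\<in>A. \<Oplus>y\<in>B x. H x y) = finsum G (case_prod H) (Sigma A B)"
proof -
  have Sigma_eq: "Sigma A B = (\<Union>x\<in>A. Pair x ` B x)"
    by auto
  have "finsum G (case_prod H) (Sigma A B) = (\<Oplus>x\<in>A. finsum G (case_prod H) (Pair x ` B x))"
    unfolding Sigma_eq
    by (rule add.finprod_UN_disjoint) (use assms in \<open>auto simp: pairwise_def disjnt_def\<close>)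
  also have "\<dots> = (\<Oplus>x\<in>A. \<Oplus>y\<in>B x. H x y)"
  proof (intro finsum_cong')
    fix x assume "x \<in> A"
    then show "finsum G (case_prod H) (Pair x ` B x) = (\<Oplus>y\<in>B x. H x y)"
      using assms by (subst finsum_reindex) (auto simp: inj_on_def)
  qed (use assms in \<open>auto intro: finsum_closed\<close>)
  finally show ?thesis ..
qed

context cring
begin

lemma PS_coeff_closed: "f \<in> carrier (PS R n) \<Longrightarrow> f m \<in> carrier R"
  by (simp add: PS_carrier)

lemma PS_mult_closed:
  "f \<in> carrier (PS R n) \<Longrightarrow> g \<in> carrier (PS R n) \<Longrightarrow> f \<otimes>\<^bsub>PS R n\<^esub> g \<in> carrier (PS R n)"
  by (auto simp: PS_carrier PS_mult intro!: finsum_closed)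

lemma PS_mult_assoc:
  assumes f: "f \<in> carrier (PS R n)" and g: "g \<in> carrier (PS R n)" and h: "h \<in> carrier (PS R n)"
  shows "(f \<otimes>\<^bsub>PS R n\<^esub> g) \<otimes>\<^bsub>PS R n\<^esub> h = f \<otimes>\<^bsub>PS R n\<^esub> (g \<otimes>\<^bsub>PS R n\<^esub> h)"
proof
  fix m
  note coeffs [simp] = PS_coeff_closed[OF f] PS_coeff_closed[OF g] PS_coeff_closed[OF h]
  show "((f \<otimes>\<^bsub>PS R n\<^esub> g) \<otimes>\<^bsub>PS R n\<^esub> h) m = (f \<otimes>\<^bsub>PS R n\<^esub> (g \<otimes>\<^bsub>PS R n\<^esub> h)) m"
  proof (cases "m \<in> expvec n")
    case True
    have fin [simp]: "finite {..a}" if "a \<le> m" for a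
      using finite_atMost_expvec expvec_le True that by blast
    have fin' [simp]: "finite {..m - b}" for b
      using finite_atMost_expvec expvec_diff True by blast
    have "((f \<otimes>\<^bsub>PS R n\<^esub> g) \<otimes>\<^bsub>PS R n\<^esub> h) m
        = (\<Oplus>a\<in>{..m}. \<Oplus>b\<in>{..a}. f b \<otimes> g (a - b) \<otimes> h (m - a))"
      using True by (auto simp: PS_mult expvec_le finsum_ldistr intro!: finsum_cong' finsum_closed)
    also have "\<dots> = finsum R (\<lambda>(a, b). f b \<otimes> g (a - b) \<otimes> h (m - a)) (SIGMA a:{..m}. {..a})"
      by (rule finsum_Sigma) auto
    also have "\<dots> = finsum R (\<lambda>(a, b). f b \<otimes> g (a - b) \<otimes> h (m - a))
        ((\<lambda>(b, c). (\<lambda>i. b i + c i, b)) ` (SIGMA b:{..m}. {..m - b}))"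
      using bij_betw_add_split[of m] by (simp add: bij_betw_def)
    also have "\<dots> = finsum R (\<lambda>(b, c). f b \<otimes> (g c \<otimes> h (m - b - c))) (SIGMA b:{..m}. {..m - b})"
      using bij_betw_add_split[of m]
      by (subst finsum_reindex) (auto simp: bij_betw_def fun_diff_def m_assoc intro!: finsum_cong')
    also have "\<dots> = (\<Oplus>b\<in>{..m}. \<Oplus>c\<in>{..m - b}. f b \<otimes> (g c \<otimes> h (m - b - c)))"
      by (rule finsum_Sigma[symmetric]) auto
    also have "\<dots> = (f \<otimes>\<^bsub>PS R n\<^esub> (g \<otimes>\<^bsub>PS R n\<^esub> h)) m"
      using True
      by (auto simp: PS_mult expvec_diff finsum_rdistr intro!: finsum_cong' finsum_closed)
    finally show ?thesis .
  qed (simp add: PS_mult)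
qed

lemma PS_mult_comm:
  assumes f: "f \<in> carrier (PS R n)" and g: "g \<in> carrier (PS R n)"
  shows "f \<otimes>\<^bsub>PS R n\<^esub> g = g \<otimes>\<^bsub>PS R n\<^esub> f"
proof
  fix m
  note coeffs [simp] = PS_coeff_closed[OF f] PS_coeff_closed[OF g]
  have "(\<Oplus>a\<in>{..m}. g a \<otimes> f (m - a)) = (\<Oplus>a\<in>(\<lambda>a. m - a) ` {..m}. g a \<otimes> f (m - a))"
    using bij_betw_diff_atMost[of m] by (simp add: bij_betw_def)
  also have "\<dots> = (\<Oplus>a\<in>{..m}. g (m - a) \<otimes> f (m - (m - a)))"
    using bij_betw_diff_atMost[of m] by (subst finsum_reindex) (auto simp: bij_betw_def)
  also have "\<dots> = (\<Oplus>a\<in>{..m}. f a \<otimes> g (m - a))"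
  proof (intro finsum_cong')
    fix a assume "a \<in> {..m}"
    then have "m - (m - a) = a"
      by (auto simp: fun_eq_iff le_fun_def)
    then show "g (m - a) \<otimes> f (m - (m - a)) = f a \<otimes> g (m - a)"
      by (simp add: m_comm)
  qed auto
  finally show "(f \<otimes>\<^bsub>PS R n\<^esub> g) m = (g \<otimes>\<^bsub>PS R n\<^esub> f) m"
    by (simp add: PS_mult)
qed

lemma PS_one_closed: "\<one>\<^bsub>PS R n\<^esub> \<in> carrier (PS R n)"
  by (auto simp: PS_carrier PS_one)

lemma PS_l_one:
  assumes g: "g \<in> carrier (PS R n)"
  shows "\<one>\<^bsub>PS R n\<^esub> \<otimes>\<^bsub>PS R n\<^esub> g = g"
proof
  fix m
  show "(\<one>\<^bsub>PS R n\<^esub> \<otimes>\<^bsub>PS R n\<^esub> g) m = g m"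
  proof (cases "m \<in> expvec n")
    case True
    have "(\<one>\<^bsub>PS R n\<^esub> \<otimes>\<^bsub>PS R n\<^esub> g) m = (\<Oplus>a\<in>{..m}. if (\<lambda>i. 0) = a then g (m - a) else \<zero>)"
      using True g by (auto simp: PS_mult PS_one PS_coeff_closed intro!: finsum_cong')
    also have "\<dots> = g m"
      using g by (subst finsum_singleton)
        (auto simp: finite_atMost_expvec[OF True] PS_coeff_closed le_fun_def fun_diff_def)
    finally show ?thesis .
  qed (use g in \<open>simp add: PS_mult PS_carrier\<close>)
qed

lemma PS_l_distr:
  assumes f: "f \<in> carrier (PS R n)" and g: "g \<in> carrier (PS R n)" and h: "h \<in> carrier (PS R n)"
  shows "(f \<oplus>\<^bsub>PS R n\<^esub> g) \<otimes>\<^bsub>PS R n\<^esub> h = f \<otimes>\<^bsub>PS R n\<^esub> h \<oplus>\<^bsub>PS R n\<^esub> g \<otimes>\<^bsub>PS R n\<^esub> h"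
proof
  fix m
  note coeffs [simp] = PS_coeff_closed[OF f] PS_coeff_closed[OF g] PS_coeff_closed[OF h]
  have "(\<Oplus>a\<in>{..m}. (f a \<oplus> g a) \<otimes> h (m - a))
      = (\<Oplus>a\<in>{..m}. f a \<otimes> h (m - a)) \<oplus> (\<Oplus>a\<in>{..m}. g a \<otimes> h (m - a))"
    by (simp add: l_distr finsum_addf)
  then show "((f \<oplus>\<^bsub>PS R n\<^esub> g) \<otimes>\<^bsub>PS R n\<^esub> h) m = (f \<otimes>\<^bsub>PS R n\<^esub> h \<oplus>\<^bsub>PS R n\<^esub> g \<otimes>\<^bsub>PS R n\<^esub> h) m"
    by (simp add: PS_mult PS_add)
qed

lemma PS_abelian_group: "abelian_group (PS R n)"
proof (rule abelian_groupI)
  fix x assume "x \<in> carrier (PS R n)"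
  then show "\<exists>y\<in>carrier (PS R n). y \<oplus>\<^bsub>PS R n\<^esub> x = \<zero>\<^bsub>PS R n\<^esub>"
    by (intro bexI[where x = "\<lambda>m. \<ominus> x m"]) (auto simp: PS_add PS_zero PS_carrier l_neg)
qed (auto simp: PS_carrier PS_add PS_zero a_ac)

lemma PS_cring: "cring (PS R n)"
proof (rule cringI)
  show "comm_monoid (PS R n)"
  proof (rule comm_monoidI)
    fix x y z assume "x \<in> carrier (PS R n)" "y \<in> carrier (PS R n)" "z \<in> carrier (PS R n)"
    then show "x \<otimes>\<^bsub>PS R n\<^esub> y \<otimes>\<^bsub>PS R n\<^esub> z = x \<otimes>\<^bsub>PS R n\<^esub> (y \<otimes>\<^bsub>PS R n\<^esub> z)"
      by (rule PS_mult_assoc)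
  next
    fix x y assume "x \<in> carrier (PS R n)" "y \<in> carrier (PS R n)"
    then show "x \<otimes>\<^bsub>PS R n\<^esub> y = y \<otimes>\<^bsub>PS R n\<^esub> x"
      by (rule PS_mult_comm)
  qed (auto simp: PS_mult_closed PS_one_closed PS_l_one)
qed (auto simp: PS_abelian_group PS_l_distr)

lemma PS_a_inv:
  assumes f: "f \<in> carrier (PS R n)"
  shows "\<ominus>\<^bsub>PS R n\<^esub> f = (\<lambda>m. \<ominus> f m)"
proof -
  interpret P: abelian_group "PS R n" by (rule PS_abelian_group)
  show ?thesis
    by (rule P.minus_equality) (use f in \<open>auto simp: PS_add PS_zero PS_carrier l_neg\<close>)
qed

lemma PS_mult_const_coeff:
  assumes "f \<in> carrier (PS R n)" "g \<in> carrier (PS R n)"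
  shows "(f \<otimes>\<^bsub>PS R n\<^esub> g) (\<lambda>i. 0) = f (\<lambda>i. 0) \<otimes> g (\<lambda>i. 0)"
proof -
  have "(f \<otimes>\<^bsub>PS R n\<^esub> g) (\<lambda>i. 0) = (\<Oplus>a\<in>{..(\<lambda>i. 0)}. f a \<otimes> g ((\<lambda>i. 0) - a))"
    by (simp add: PS_mult)
  also have "{..(\<lambda>i. 0 :: nat)} = {\<lambda>i. 0}"
    by (auto simp: le_fun_def fun_eq_iff)
  also have "(\<Oplus>a\<in>{\<lambda>i. 0}. f a \<otimes> g ((\<lambda>i. 0) - a)) = f (\<lambda>i. 0) \<otimes> g (\<lambda>i. 0)"
    using assms by (simp add: PS_coeff_closed fun_diff_def)
  finally show ?thesis .
qed

end

section \<open>Artinian rings are Noetherian\<close>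

lemma mono_strict_subseq:
  fixes L :: "nat \<Rightarrow> 'a::order"
  assumes "mono L" and "\<not> (\<exists>m. \<forall>k\<ge>m. L k = L m)"
  shows "\<exists>\<sigma>. \<forall>k. L (\<sigma> k) < L (\<sigma> (Suc k))"
proof -
  have "\<exists>k. L m < L k" for m
  proof -
    obtain k where "k \<ge> m" "L k \<noteq> L m"
      using assms(2) by blast
    then show ?thesis
      using monoD[OF assms(1)] order.not_eq_order_implies_strict by metis
  qed
  then obtain succ where "\<And>m. L m < L (succ m)"
    by metis
  then show ?thesis
    by (intro exI[where x = "\<lambda>k. (succ ^^ k) 0"]) simp
qed

definition acc_between :: "('a, 'b) ring_scheme \<Rightarrow> 'a set \<Rightarrow> 'a set \<Rightarrow> bool" where
  "acc_between R A B \<longleftrightarrow>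
     (\<forall>L :: nat \<Rightarrow> 'a set. (\<forall>k. ideal (L k) R \<and> A \<subseteq> L k \<and> L k \<subseteq> B) \<and> mono L \<longrightarrow> (\<exists>m. \<forall>k\<ge>m. L k = L m))"

primrec ideal_adjoin :: "('a, 'b) ring_scheme \<Rightarrow> 'a set \<Rightarrow> (nat \<Rightarrow> 'a) \<Rightarrow> nat \<Rightarrow> nat \<Rightarrow> 'a set"
  where
    "ideal_adjoin R P v j 0 = P"
  | "ideal_adjoin R P v j (Suc N) = ideal_adjoin R P v j N <+>\<^bsub>R\<^esub> PIdl\<^bsub>R\<^esub> (v (j + N))"

inductive_set maximal_products :: "('a, 'b) ring_scheme \<Rightarrow> 'a set set" for R
  where
    carrier: "carrier R \<in> maximal_products R"
  | mult: "P \<in> maximal_products R \<Longrightarrow> maximalideal M R \<Longrightarrow> P \<cdot>\<^bsub>R\<^esub> M \<in> maximal_products R"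

context ring
begin

lemma acc_between_if_no_strict_chain:
  assumes "\<And>L. \<forall>k. ideal (L k) R \<and> A \<subseteq> L k \<and> L k \<subseteq> B \<Longrightarrow> \<forall>k. L k \<subset> L (Suc k) \<Longrightarrow> False"
  shows "acc_between R A B"
  unfolding acc_between_def
proof (intro allI impI)
  fix L :: "nat \<Rightarrow> 'a set"
  assume L: "(\<forall>k. ideal (L k) R \<and> A \<subseteq> L k \<and> L k \<subseteq> B) \<and> mono L"
  show "\<exists>m. \<forall>k\<ge>m. L k = L m"
  proof (rule ccontr)
    assume "\<nexists>m. \<forall>k\<ge>m. L k = L m"
    then obtain \<sigma> where "\<forall>k. L (\<sigma> k) \<subset> L (\<sigma> (Suc k))"
      using mono_strict_subseq[of L] L by auto
    then show False
      using assms[of "L \<circ> \<sigma>"] L by auto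
  qed
qed

lemma noetherian_if_acc_between:
  assumes "acc_between R {\<zero>} (carrier R)"
  shows "noetherian R"
  unfolding noetherian_def
proof (intro allI impI)
  fix I :: "nat \<Rightarrow> 'a set"
  assume I: "(\<forall>k. ideal (I k) R) \<and> (\<forall>k. I k \<subseteq> I (Suc k))"
  then have "\<forall>k. ideal (I k) R \<and> {\<zero>} \<subseteq> I k \<and> I k \<subseteq> carrier R" "mono I"
    by (auto simp: mono_iff_le_Suc dest: ideal.Icarr additive_subgroup.zero_closed[OF ideal.axioms(1)])
  with assms show "\<exists>m. \<forall>k\<ge>m. I k = I m"
    unfolding acc_between_def by blast
qed

lemma artinian_has_minimal:
  assumes "artinian R" and "S \<noteq> {}" and "\<And>I. I \<in> S \<Longrightarrow> ideal I R"
  shows "\<exists>I\<in>S. \<forall>J\<in>S. J \<subseteq> I \<longrightarrow> J = I"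
proof -
  let ?r = "{(J, I). J \<in> S \<and> I \<in> S \<and> J \<subset> I}"
  have "wf ?r"
  proof (rule wf_iff_no_infinite_down_chain[THEN iffD2], rule notI)
    assume "\<exists>f. \<forall>i. (f (Suc i), f i) \<in> ?r"
    then obtain f where f: "\<And>i. f i \<in> S" "\<And>i. f (Suc i) \<subset> f i"
      by blast
    then have "(\<forall>k. ideal (f k) R) \<and> (\<forall>k. f (Suc k) \<subseteq> f k)"
      using assms(3) by auto
    then obtain m where "\<forall>k\<ge>m. f k = f m"
      using assms(1) unfolding artinian_def by blast
    then have "f (Suc m) = f m"
      using le_Suc_eq by blast
    then show False
      using f(2)[of m] by simp
  qed
  obtain I0 where "I0 \<in> S"
    using assms(2) by auto
  then obtain I where "I \<in> S" and min: "\<forall>J. (J, I) \<in> ?r \<longrightarrow> J \<notin> S"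
    using wf_eq_minimal[THEN iffD1, rule_format, OF \<open>wf ?r\<close>] by blast
  have "J = I" if "J \<in> S" "J \<subseteq> I" for J
    using min that \<open>I \<in> S\<close> by blast
  with \<open>I \<in> S\<close> show ?thesis
    by blast
qed

lemma modular_subgroup_eq:
  assumes "additive_subgroup A R" "additive_subgroup B R" "Q \<subseteq> carrier R"
    and "A \<subseteq> B" "B \<inter> Q \<subseteq> A" "B \<subseteq> A <+>\<^bsub>R\<^esub> Q"
  shows "A = B"
proof
  show "B \<subseteq> A"
  proof
    fix b assume b: "b \<in> B"
    then obtain a q where aq: "a \<in> A" "q \<in> Q" "b = a \<oplus> q"
      using assms(6) unfolding set_add_def' by auto
    have carr: "a \<in> carrier R" "q \<in> carrier R"
      using aq(1,2) assms(3) additive_subgroup.a_subset[OF assms(1)] by auto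
    then have "q = \<ominus> a \<oplus> b"
      using aq(3) by (simp add: a_assoc[symmetric] l_neg)
    moreover have "\<ominus> a \<in> B"
      using aq(1) assms(4) additive_subgroup.a_inv_closed[OF assms(2)] by blast
    ultimately have "q \<in> B"
      using b additive_subgroup.a_closed[OF assms(2)] by simp
    then have "q \<in> A"
      using aq(2) assms(5) by blast
    then show "b \<in> A"
      using aq(1,3) additive_subgroup.a_closed[OF assms(1)] by simp
  qed
qed (rule assms(4))

lemma set_add_mono_left: "A \<subseteq> A' \<Longrightarrow> A <+>\<^bsub>R\<^esub> B \<subseteq> A' <+>\<^bsub>R\<^esub> B"
  unfolding set_add_def' by blast

lemma chain_stabilizes_modular:
  fixes L :: "nat \<Rightarrow> 'a set"
  assumes L: "\<And>k. additive_subgroup (L k) R" "mono L" and Q: "Q \<subseteq> carrier R"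
    and m1: "\<forall>k\<ge>m1. L k \<inter> Q = L m1 \<inter> Q" and m2: "\<forall>k\<ge>m2. L k \<subseteq> L m2 <+>\<^bsub>R\<^esub> Q"
  shows "\<exists>m. \<forall>k\<ge>m. L k = L m"
proof (intro exI allI impI)
  fix k assume "max m1 m2 \<le> k"
  then have k: "m1 \<le> k" "m2 \<le> k" "max m1 m2 \<le> k"
    by auto
  show "L k = L (max m1 m2)"
  proof (rule modular_subgroup_eq[symmetric, OF L(1) L(1) Q])
    show "L (max m1 m2) \<subseteq> L k"
      using monoD[OF L(2) k(3)] .
    have "L k \<inter> Q = L m1 \<inter> Q"
      using m1 k(1) by blast
    then show "L k \<inter> Q \<subseteq> L (max m1 m2)"
      using monoD[OF L(2) max.cobounded1] by auto
    have "L k \<subseteq> L m2 <+>\<^bsub>R\<^esub> Q"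
      using m2 k(2) by blast
    also have "\<dots> \<subseteq> L (max m1 m2) <+>\<^bsub>R\<^esub> Q"
      using set_add_mono_left[OF monoD[OF L(2) max.cobounded2]] .
    finally show "L k \<subseteq> L (max m1 m2) <+>\<^bsub>R\<^esub> Q" .
  qed
qed

lemma Un_subset_set_add:
  assumes "ideal I R" "ideal J R"
  shows "I \<union> J \<subseteq> I <+>\<^bsub>R\<^esub> J"
proof -
  have "I \<union> J \<subseteq> carrier R"
    using assms by (simp add: ideal.axioms(1) additive_subgroup.a_subset)
  then show ?thesis
    using genideal_self union_genideal[OF assms] by metis
qed

lemma ideal_add_cancel_left:
  assumes "ideal I R" "g \<in> I" "y \<in> carrier R" "g \<oplus> y \<in> I"
  shows "y \<in> I"
proof -
  interpret ideal I R by fact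
  have "y = \<ominus> g \<oplus> (g \<oplus> y)"
    using assms(2,3) by (simp add: a_assoc[symmetric] l_neg)
  also have "\<dots> \<in> I"
    using assms(2,4) by simp
  finally show ?thesis .
qed

lemma acc_between_trans:
  assumes AB: "acc_between R A B" and BC: "acc_between R B C"
    and B: "ideal B R" and C: "ideal C R" and "A \<subseteq> B" "B \<subseteq> C"
  shows "acc_between R A C"
  unfolding acc_between_def
proof (intro allI impI)
  fix L :: "nat \<Rightarrow> 'a set"
  assume L: "(\<forall>k. ideal (L k) R \<and> A \<subseteq> L k \<and> L k \<subseteq> C) \<and> mono L"
  then have L_ideal: "\<And>k. ideal (L k) R" and "mono L"
    by auto
  have "\<exists>m. \<forall>k\<ge>m. L k \<inter> B = L m \<inter> B"
  proof (rule AB[unfolded acc_between_def, rule_format], intro conjI allI)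
    show "mono (\<lambda>k. L k \<inter> B)"
      using \<open>mono L\<close> by (auto simp: mono_def)
  qed (use L B \<open>A \<subseteq> B\<close> in \<open>auto intro: i_intersect\<close>)
  then obtain m1 where m1: "\<forall>k\<ge>m1. L k \<inter> B = L m1 \<inter> B" ..
  have "\<exists>m. \<forall>k\<ge>m. L k <+>\<^bsub>R\<^esub> B = L m <+>\<^bsub>R\<^esub> B"
  proof (rule BC[unfolded acc_between_def, rule_format], intro conjI allI)
    show "mono (\<lambda>k. L k <+>\<^bsub>R\<^esub> B)"
      using \<open>mono L\<close> unfolding mono_def set_add_def' by blast
    show "L k <+>\<^bsub>R\<^esub> B \<subseteq> C" for k
      unfolding union_genideal[OF L_ideal B, symmetric]
      by (rule genideal_minimal[OF C]) (use L \<open>B \<subseteq> C\<close> in blast)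
  qed (use Un_subset_set_add[OF L_ideal B] L_ideal B in \<open>auto intro: add_ideals\<close>)
  then obtain m2 where "\<forall>k\<ge>m2. L k <+>\<^bsub>R\<^esub> B = L m2 <+>\<^bsub>R\<^esub> B" ..
  then have "\<forall>k\<ge>m2. L k \<subseteq> L m2 <+>\<^bsub>R\<^esub> B"
    using Un_subset_set_add[OF L_ideal B] by blast
  moreover have "B \<subseteq> carrier R"
    using ideal.Icarr[OF B] by blast
  ultimately show "\<exists>m. \<forall>k\<ge>m. L k = L m"
    using chain_stabilizes_modular[OF ideal.axioms(1)[OF L_ideal] \<open>mono L\<close> _ m1] by blast
qed

end

context cring
begin

lemma cring_idealI:
  assumes "I \<subseteq> carrier R" "\<zero> \<in> I"
    and "\<And>a b. a \<in> I \<Longrightarrow> b \<in> I \<Longrightarrow> a \<oplus> b \<in> I"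
    and "\<And>a x. a \<in> I \<Longrightarrow> x \<in> carrier R \<Longrightarrow> x \<otimes> a \<in> I"
  shows "ideal I R"
proof (rule idealI)
  have "\<ominus> a \<in> I" if "a \<in> I" for a
  proof -
    have "\<ominus> a = \<ominus> \<one> \<otimes> a"
      using that assms(1) by (auto simp: l_minus)
    then show ?thesis
      using assms(4)[OF that] by simp
  qed
  then show "subgroup I (add_monoid R)"
    using assms(1-3) by (intro add.subgroupI) auto
  show "a \<otimes> x \<in> I" if "a \<in> I" "x \<in> carrier R" for a x
  proof -
    have "a \<otimes> x = x \<otimes> a"
      using that assms(1) m_comm by blast
    then show ?thesis
      using assms(4)[OF that] by simp
  qed
qed (use assms(4) in \<open>auto simp: ring_axioms\<close>)

lemma mem_set_add_cgenideal:
  "x \<in> I <+>\<^bsub>R\<^esub> PIdl a \<longleftrightarrow> (\<exists>g\<in>I. \<exists>r\<in>carrier R. x = g \<oplus> r \<otimes> a)"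
  by (auto simp: set_add_def' cgenideal_def)

lemma exists_maximalideal_superset:
  assumes "ideal I R" "\<one> \<notin> I"
  shows "\<exists>M. maximalideal M R \<and> I \<subseteq> M"
proof -
  let ?A = "{J. ideal J R \<and> I \<subseteq> J \<and> \<one> \<notin> J}"
  have "\<exists>M\<in>?A. \<forall>J\<in>?A. M \<subseteq> J \<longrightarrow> J = M"
  proof (rule subset_Zorn_nonempty)
    fix C assume C: "C \<noteq> {}" "subset.chain ?A C"
    then have "subset.chain {J. ideal J R} C"
      by (auto simp: pred_on.chain_def)
    then have "ideal (if C = {} then {\<zero>} else \<Union>C) R"
      by (rule chain_Union_is_ideal)
    with C(1) have "ideal (\<Union>C) R"
      by simp
    moreover have "I \<subseteq> \<Union>C" "\<one> \<notin> \<Union>C"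
      using C unfolding pred_on.chain_def by blast+
    ultimately show "\<Union>C \<in> ?A"
      by blast
  qed (use assms in blast)
  then obtain M where M: "M \<in> ?A" "\<forall>J\<in>?A. M \<subseteq> J \<longrightarrow> J = M"
    by blast
  have "maximalideal M R"
  proof (rule maximalidealI)
    show "ideal M R" "carrier R \<noteq> M"
      using M(1) by auto
    fix J assume "ideal J R" "M \<subseteq> J" "J \<subseteq> carrier R"
    then show "J = M \<or> J = carrier R"
      using M ideal.one_imp_carrier by blast
  qed
  with M(1) show ?thesis
    by blast
qed

lemma maximalideal_unit_mod:
  assumes M: "maximalideal M R" and a: "a \<in> carrier R" "a \<notin> M"
  shows "\<exists>b\<in>carrier R. \<exists>y\<in>M. \<one> = y \<oplus> b \<otimes> a"
proof -
  have "ideal M R"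
    using M maximalideal.axioms(1) by blast
  then have J: "ideal (M <+>\<^bsub>R\<^esub> PIdl a) R"
    using add_ideals cgenideal_ideal a(1) by blast
  have "M \<union> PIdl a \<subseteq> M <+>\<^bsub>R\<^esub> PIdl a"
    using Un_subset_set_add \<open>ideal M R\<close> cgenideal_ideal a(1) by blast
  then have "M <+>\<^bsub>R\<^esub> PIdl a = carrier R"
    using maximalideal.I_maximal[OF M J] cgenideal_self[OF a(1)] a(2) J
    by (auto dest: ideal.Icarr)
  then show ?thesis
    using mem_set_add_cgenideal[of \<one> M a] by auto
qed

lemma mem_maximalideal_if_mult_mem:
  assumes M: "maximalideal M R" and L: "ideal L R" and v: "v \<in> carrier R" "v \<notin> L"
    and vM: "\<And>y. y \<in> M \<Longrightarrow> v \<otimes> y \<in> L" and a: "a \<in> carrier R" "a \<otimes> v \<in> L"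
  shows "a \<in> M"
proof (rule ccontr)
  assume "a \<notin> M"
  then obtain b y where b: "b \<in> carrier R" and y: "y \<in> M" and one: "\<one> = y \<oplus> b \<otimes> a"
    using maximalideal_unit_mod M a(1) by blast
  have "y \<in> carrier R"
    using y M by (meson maximalideal.axioms(1) ideal.Icarr)
  then have "v = v \<otimes> y \<oplus> b \<otimes> (a \<otimes> v)"
    using one b a(1) v(1) by (metis l_distr l_one m_assoc m_closed m_comm)
  moreover have "v \<otimes> y \<in> L" "b \<otimes> (a \<otimes> v) \<in> L"
    using vM[OF y] ideal.I_l_closed[OF L a(2) b] by auto
  ultimately have "v \<in> L"
    using L by (metis additive_subgroup.a_closed ideal.axioms(1))
  with v(2) show False ..
qed

lemma ideal_adjoin_ideal:
  "ideal P R \<Longrightarrow> range v \<subseteq> carrier R \<Longrightarrow> ideal (ideal_adjoin R P v j N) R"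
  by (induction N) (auto intro: add_ideals cgenideal_ideal)

lemma ideal_adjoin_mono:
  assumes "ideal P R" "range v \<subseteq> carrier R"
  shows "mono (ideal_adjoin R P v j)"
  unfolding mono_iff_le_Suc
proof
  fix N
  have "v (j + N) \<in> carrier R"
    using assms(2) by auto
  then show "ideal_adjoin R P v j N \<subseteq> ideal_adjoin R P v j (Suc N)"
    using Un_subset_set_add[OF ideal_adjoin_ideal[OF assms] cgenideal_ideal] by auto
qed

lemma ideal_adjoin_shift:
  assumes "ideal P R" "range v \<subseteq> carrier R"
  shows "ideal_adjoin R P v (Suc j) N \<subseteq> ideal_adjoin R P v j (Suc N)"
proof (induction N)
  case 0
  show ?case
    using Un_subset_set_add[OF assms(1) cgenideal_ideal] assms(2) by auto
next
  case (Suc N)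
  have "ideal_adjoin R P v (Suc j) (Suc N)
      = ideal_adjoin R P v (Suc j) N <+>\<^bsub>R\<^esub> PIdl (v (j + Suc N))"
    by simp
  also have "\<dots> \<subseteq> ideal_adjoin R P v j (Suc N) <+>\<^bsub>R\<^esub> PIdl (v (j + Suc N))"
    using Suc.IH unfolding set_add_def' by blast
  also have "\<dots> = ideal_adjoin R P v j (Suc (Suc N))"
    by (simp only: ideal_adjoin.simps(2))
  finally show ?case .
qed

lemma ideal_adjoin_subset:
  assumes L: "ideal L R" "P \<subseteq> L" and v: "\<And>i. i < N \<Longrightarrow> v (j + i) \<in> L"
  shows "ideal_adjoin R P v j N \<subseteq> L"
  using v
proof (induction N)
  case (Suc N)
  show ?case
  proof
    fix x assume "x \<in> ideal_adjoin R P v j (Suc N)"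
    then obtain g r where "g \<in> ideal_adjoin R P v j N" "r \<in> carrier R" "x = g \<oplus> r \<otimes> v (j + N)"
      by (auto simp: mem_set_add_cgenideal)
    moreover have "g \<in> L" "r \<otimes> v (j + N) \<in> L"
      using calculation Suc ideal.I_l_closed[OF L(1)] by auto
    ultimately show "x \<in> L"
      using L(1) by (simp add: additive_subgroup.a_closed ideal.axioms(1))
  qed
qed (use L in simp)

lemma ideal_adjoin_Union_ideal:
  assumes "ideal P R" "range v \<subseteq> carrier R"
  shows "ideal (\<Union>N. ideal_adjoin R P v j N) R"
proof -
  have "subset.chain {I. ideal I R} (range (ideal_adjoin R P v j))"
    using ideal_adjoin_ideal[OF assms] monoD[OF ideal_adjoin_mono[OF assms]] nat_le_linear
    unfolding pred_on.chain_def by blast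
  then have "ideal (if range (ideal_adjoin R P v j) = {} then {\<zero>}
      else \<Union>(range (ideal_adjoin R P v j))) R"
    by (rule chain_Union_is_ideal)
  then show ?thesis
    by simp
qed

lemma ideal_adjoin_Union_shift:
  assumes "ideal P R" "range v \<subseteq> carrier R"
  shows "(\<Union>N. ideal_adjoin R P v (Suc j) N) \<subseteq> (\<Union>N. ideal_adjoin R P v j N)"
proof
  fix x assume "x \<in> (\<Union>N. ideal_adjoin R P v (Suc j) N)"
  then obtain N where "x \<in> ideal_adjoin R P v (Suc j) N"
    by blast
  then have "x \<in> ideal_adjoin R P v j (Suc N)"
    using ideal_adjoin_shift[OF assms] by blast
  then show "x \<in> (\<Union>N. ideal_adjoin R P v j N)"
    by (rule UN_I[OF UNIV_I])
qed

lemma mem_ideal_adjoin_one: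
  assumes "ideal P R" "v j \<in> carrier R"
  shows "v j \<in> ideal_adjoin R P v j 1"
  using Un_subset_set_add[OF assms(1) cgenideal_ideal[OF assms(2)]] cgenideal_self[OF assms(2)]
  by auto

lemma ideal_adjoin_Int_chain_subset:
  assumes M: "maximalideal M R" and P: "ideal P R"
    and L: "\<And>k. ideal (L k) R" "\<And>k. P \<subseteq> L k" "mono L"
    and v: "\<And>k. v k \<in> L (Suc k)" "\<And>k. v k \<notin> L k" "\<And>k y. y \<in> M \<Longrightarrow> v k \<otimes> y \<in> P"
  shows "ideal_adjoin R P v (Suc j) N \<inter> L (Suc j) \<subseteq> P"
proof (induction N)
  case (Suc N)
  let ?K = "Suc (j + N)"
  have vc: "v k \<in> carrier R" for k
    using ideal.Icarr[OF L(1) v(1)] .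
  show ?case
  proof
    fix x assume x: "x \<in> ideal_adjoin R P v (Suc j) (Suc N) \<inter> L (Suc j)"
    then obtain g r where g: "g \<in> ideal_adjoin R P v (Suc j) N" and r: "r \<in> carrier R"
      and x_eq: "x = g \<oplus> r \<otimes> v ?K"
      by (auto simp: mem_set_add_cgenideal)
    have g_L: "g \<in> L ?K"
    proof (rule subsetD[OF ideal_adjoin_subset[OF L(1,2)] g])
      fix i assume "i < N"
      then show "v (Suc j + i) \<in> L ?K"
        using v(1) monoD[OF L(3), of "Suc (Suc j + i)" ?K] by auto
    qed
    have "x \<in> L ?K"
      using x monoD[OF L(3), of "Suc j" ?K] by auto
    then have "r \<otimes> v ?K \<in> L ?K"
      using ideal_add_cancel_left[OF L(1) g_L] x_eq r vc by simp
    then have "r \<in> M"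
      using mem_maximalideal_if_mult_mem[OF M L(1) vc v(2)] v(3) L(2) r by blast
    then have rv_P: "r \<otimes> v ?K \<in> P"
      using v(3) r vc m_comm by metis
    have "g \<in> L (Suc j)"
      using ideal_add_cancel_left[OF L(1) subsetD[OF L(2) rv_P], of g] x x_eq
        ideal.Icarr[OF ideal_adjoin_ideal[OF P] g] vc r
      by (auto simp: a_comm)
    then have "g \<in> P"
      using Suc.IH g by blast
    then show "x \<in> P"
      using rv_P x_eq P by (simp add: additive_subgroup.a_closed ideal.axioms(1))
  qed
qed simp

lemma acc_between_if_annihilated:
  assumes art: "artinian R" and M: "maximalideal M R" and P: "ideal P R"
    and kill: "\<And>q y. q \<in> Q \<Longrightarrow> y \<in> M \<Longrightarrow> q \<otimes> y \<in> P"
  shows "acc_between R P Q"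
proof (rule acc_between_if_no_strict_chain)
  fix L assume L: "\<forall>k. ideal (L k) R \<and> P \<subseteq> L k \<and> L k \<subseteq> Q" and strict: "\<forall>k. L k \<subset> L (Suc k)"
  have "\<forall>k. \<exists>w. w \<in> L (Suc k) \<and> w \<notin> L k"
    using strict by blast
  then obtain v where v: "\<And>k. v k \<in> L (Suc k)" "\<And>k. v k \<notin> L k"
    by metis
  have L_ideal: "\<And>k. ideal (L k) R"
    using L by blast
  have vc: "range v \<subseteq> carrier R"
    using ideal.Icarr[OF L_ideal v(1)] by blast
  have "mono L"
    using strict by (auto simp: mono_iff_le_Suc)
  have vM: "v k \<otimes> y \<in> P" if "y \<in> M" for k y
    using kill that v(1) L by blast
  text \<open>\<open>Q/P\<close> is a vector space over \<open>R/M\<close> in which the \<open>v k\<close> are independent, so the ideals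
    \<open>W j = P + (v j, v (j + 1), \<dots>)\<close> descend strictly.\<close>
  define W where "W j = (\<Union>N. ideal_adjoin R P v j N)" for j
  have "\<forall>k. ideal (W k) R" "\<forall>k. W (Suc k) \<subseteq> W k"
    unfolding W_def using ideal_adjoin_Union_ideal[OF P vc] ideal_adjoin_Union_shift[OF P vc] by auto
  then obtain m where "\<forall>k\<ge>m. W k = W m"
    using conjunct2[OF art[unfolded artinian_def], rule_format, of W] by blast
  then have "W (Suc m) = W m"
    using le_Suc_eq by blast
  moreover have "v m \<in> W m"
    unfolding W_def using mem_ideal_adjoin_one[OF P, of v m] vc by blast
  ultimately obtain N where "v m \<in> ideal_adjoin R P v (Suc m) N"
    unfolding W_def by (metis UN_E)
  then have "v m \<in> P"
    using ideal_adjoin_Int_chain_subset[OF M P _ _ \<open>mono L\<close> v vM] v(1) L by blast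
  then show False
    using v(2) L by blast
qed

lemma maximal_products_acc_between:
  assumes "artinian R" and "P \<in> maximal_products R"
  shows "ideal P R \<and> acc_between R P (carrier R)"
  using assms(2)
proof (induction rule: maximal_products.induct)
  case carrier
  have "acc_between R (carrier R) (carrier R)"
  proof (rule acc_between_if_no_strict_chain)
    fix L :: "nat \<Rightarrow> 'a set"
    assume "\<forall>k. ideal (L k) R \<and> carrier R \<subseteq> L k \<and> L k \<subseteq> carrier R"
    then have "L k = carrier R" for k
      by (simp add: subset_antisym)
    then show "\<forall>k. L k \<subset> L (Suc k) \<Longrightarrow> False"
      by simp
  qed
  then show ?case
    by (simp add: oneideal)
next
  case (mult P M)
  then have P: "ideal P R" and M: "ideal M R"
    by (auto dest: maximalideal.axioms(1))
  have "acc_between R (P \<cdot> M) P"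
    using acc_between_if_annihilated[OF assms(1) mult.hyps(2) ideal_prod_is_ideal[OF P M]]
    by (simp add: ideal_prod.prod)
  moreover have "P \<cdot> M \<subseteq> P" "P \<subseteq> carrier R"
    using ideal_prod_inter[OF P M] ideal.Icarr[OF P] by auto
  ultimately have "acc_between R (P \<cdot> M) (carrier R)"
    using acc_between_trans[OF _ _ P oneideal] mult.IH by simp
  then show ?case
    using ideal_prod_is_ideal[OF P M] by simp
qed

lemma ideal_mult_image:
  assumes M: "ideal M R" and x: "x \<in> carrier R"
  shows "ideal ((\<otimes>) x ` M) R"
proof (rule cring_idealI)
  have Mc: "M \<subseteq> carrier R"
    using M by (simp add: ideal.axioms(1) additive_subgroup.a_subset)
  then show "(\<otimes>) x ` M \<subseteq> carrier R"
    using x by auto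
  have "x \<otimes> \<zero> = \<zero>"
    using x by simp
  then show "\<zero> \<in> (\<otimes>) x ` M"
    using M by (metis additive_subgroup.zero_closed ideal.axioms(1) image_eqI)
  fix a b assume "a \<in> (\<otimes>) x ` M" "b \<in> (\<otimes>) x ` M"
  then obtain y z where yz: "y \<in> M" "z \<in> M" "a = x \<otimes> y" "b = x \<otimes> z"
    by blast
  then have "a \<oplus> b = x \<otimes> (y \<oplus> z)"
    using Mc x by (simp add: r_distr subsetD)
  moreover have "y \<oplus> z \<in> M"
    using yz M by (simp add: additive_subgroup.a_closed ideal.axioms(1))
  ultimately show "a \<oplus> b \<in> (\<otimes>) x ` M"
    by blast
next
  fix a r assume "a \<in> (\<otimes>) x ` M" "r \<in> carrier R"
  then obtain y where y: "y \<in> M" "a = x \<otimes> y" "r \<in> carrier R"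
    by blast
  then have "r \<otimes> a = x \<otimes> (r \<otimes> y)"
    using x ideal.Icarr[OF M y(1)] by (simp add: m_lcomm)
  moreover have "r \<otimes> y \<in> M"
    using ideal.I_l_closed[OF M y(1) y(3)] .
  ultimately show "r \<otimes> a \<in> (\<otimes>) x ` M"
    by blast
qed

lemma eq_zero_if_fixed_by_maximals:
  assumes x: "x \<in> carrier R" and fixed: "\<And>M. maximalideal M R \<Longrightarrow> \<exists>y\<in>M. x = x \<otimes> y"
  shows "x = \<zero>"
proof (rule ccontr)
  assume "x \<noteq> \<zero>"
  let ?Ann = "{a \<in> carrier R. a \<otimes> x = \<zero>}"
  have "ideal ?Ann R"
    by (rule cring_idealI) (use x in \<open>auto simp: l_distr m_assoc\<close>)
  moreover have "\<one> \<notin> ?Ann"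
    using x \<open>x \<noteq> \<zero>\<close> by simp
  ultimately obtain M where M: "maximalideal M R" "?Ann \<subseteq> M"
    using exists_maximalideal_superset by blast
  then obtain y where y: "y \<in> M" "x \<otimes> y = x"
    using fixed by metis
  have M_ideal: "ideal M R"
    using M(1) maximalideal.axioms(1) by blast
  have yc: "y \<in> carrier R"
    using ideal.Icarr[OF M_ideal y(1)] .
  have "(\<one> \<ominus> y) \<otimes> x = \<zero>"
    using x yc y(2) by (simp add: a_minus_def l_distr l_minus m_comm[of y x] r_neg)
  then have "\<one> \<ominus> y \<in> M"
    using M(2) yc by auto
  then have "\<one> \<ominus> y \<oplus> y \<in> M"
    using y(1) M_ideal by (simp add: additive_subgroup.a_closed ideal.axioms(1))
  moreover have "\<one> \<ominus> y \<oplus> y = \<one>"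
    using yc by (simp add: a_minus_def a_assoc l_neg)
  ultimately have "M = carrier R"
    using ideal.one_imp_carrier[OF M_ideal] by simp
  with maximalideal.I_notcarr[OF M(1)] show False
    by simp
qed

lemma ideal_prod_annihilated:
  assumes P: "ideal P R" and M: "ideal M R" and x: "x \<in> carrier R"
    and kill: "\<And>y q. y \<in> M \<Longrightarrow> q \<in> P \<Longrightarrow> (x \<otimes> y) \<otimes> q = \<zero>"
    and s: "s \<in> P \<cdot> M"
  shows "x \<otimes> s = \<zero>"
  using s
proof (induction s rule: ideal_prod.induct)
  case (prod i j)
  then have "x \<otimes> (i \<otimes> j) = (x \<otimes> j) \<otimes> i"
    using x ideal.Icarr[OF P] ideal.Icarr[OF M] by (simp add: m_ac)
  then show ?case
    using kill prod by simp
next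
  case (sum s1 s2)
  then have "s1 \<in> carrier R" "s2 \<in> carrier R"
    using ideal_prod_in_carrier[OF P M] by auto
  then show ?case
    using sum.IH x by (simp add: r_distr)
qed

lemma artinian_ideal_zero_if_absorbs_maximals:
  assumes art: "artinian R" and P: "ideal P R"
    and absorb: "\<And>M. maximalideal M R \<Longrightarrow> P \<cdot> M = P"
  shows "P = {\<zero>}"
proof (rule ccontr)
  assume "P \<noteq> {\<zero>}"
  then obtain p where p: "p \<in> P" "p \<noteq> \<zero>"
    using additive_subgroup.zero_closed[OF ideal.axioms(1)[OF P]] by blast
  text \<open>A minimal ideal \<open>L\<close> with \<open>L P \<noteq> 0\<close> contains some \<open>x\<close> with \<open>x P \<noteq> 0\<close>; by minimality
    \<open>x M = L \<ni> x\<close> for every maximal ideal \<open>M\<close>, which forces \<open>x = 0\<close>.\<close>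
  define S where "S = {L. ideal L R \<and> (\<exists>z\<in>L. \<exists>q\<in>P. z \<otimes> q \<noteq> \<zero>)}"
  have "\<one> \<otimes> p \<noteq> \<zero>"
    using p ideal.Icarr[OF P] by simp
  then have "carrier R \<in> S"
    unfolding S_def using oneideal p(1) one_closed by blast
  moreover have S_ideal: "\<And>L. L \<in> S \<Longrightarrow> ideal L R"
    unfolding S_def by blast
  ultimately obtain L where L: "L \<in> S" and min: "\<forall>J\<in>S. J \<subseteq> L \<longrightarrow> J = L"
    using artinian_has_minimal[OF art _ S_ideal] by blast
  then obtain x q where x: "x \<in> L" "q \<in> P" "x \<otimes> q \<noteq> \<zero>"
    unfolding S_def by blast
  have L_ideal: "ideal L R"
    using S_ideal[OF L] .
  have xc: "x \<in> carrier R"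
    using ideal.Icarr[OF L_ideal x(1)] .
  have "x = \<zero>"
  proof (rule eq_zero_if_fixed_by_maximals[OF xc])
    fix M assume M: "maximalideal M R"
    then have M_ideal: "ideal M R"
      by (rule maximalideal.axioms(1))
    have "(\<otimes>) x ` M \<in> S"
    proof (rule ccontr)
      assume "(\<otimes>) x ` M \<notin> S"
      then have "(x \<otimes> y) \<otimes> q' = \<zero>" if "y \<in> M" "q' \<in> P" for y q'
        using ideal_mult_image[OF M_ideal xc] that unfolding S_def by auto
      then have "x \<otimes> q = \<zero>"
        using ideal_prod_annihilated[OF P M_ideal xc] absorb[OF M] x(2) by simp
      with x(3) show False ..
    qed
    moreover have "(\<otimes>) x ` M \<subseteq> L"
      using ideal.I_r_closed[OF L_ideal x(1)] ideal.Icarr[OF M_ideal] by auto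
    ultimately have "(\<otimes>) x ` M = L"
      using min by simp
    then show "\<exists>y\<in>M. x = x \<otimes> y"
      using x(1) by auto
  qed
  then show False
    using x(3) ideal.Icarr[OF P x(2)] by simp
qed

theorem artinian_imp_noetherian:
  assumes "artinian R"
  shows "noetherian R"
proof -
  have ideals: "\<And>I. I \<in> maximal_products R \<Longrightarrow> ideal I R"
    using maximal_products_acc_between[OF assms] by simp
  have "maximal_products R \<noteq> {}"
    using maximal_products.carrier by auto
  then obtain P where P: "P \<in> maximal_products R"
    and min: "\<forall>J\<in>maximal_products R. J \<subseteq> P \<longrightarrow> J = P"
    using artinian_has_minimal[OF assms _ ideals] by auto
  have "P \<cdot> M = P" if "maximalideal M R" for M
    using min maximal_products.mult[OF P that]
      ideal_prod_inter[OF ideals[OF P] maximalideal.axioms(1)[OF that]] by simp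
  then have "P = {\<zero>}"
    using artinian_ideal_zero_if_absorbs_maximals[OF assms ideals[OF P]] by simp
  then show ?thesis
    using maximal_products_acc_between[OF assms P] noetherian_if_acc_between by simp
qed

end

section \<open>Finitely generated modules over a Noetherian subring\<close>

definition submodule_over :: "('a, 'b) ring_scheme \<Rightarrow> 'a set \<Rightarrow> 'a set \<Rightarrow> bool" where
  "submodule_over R K N \<longleftrightarrow> additive_subgroup N R \<and> (\<forall>k\<in>K. \<forall>v\<in>N. k \<otimes>\<^bsub>R\<^esub> v \<in> N)"

lemma (in ring) finsum_additive_subgroup:
  assumes H: "additive_subgroup H R" and f: "\<And>i. i \<in> A \<Longrightarrow> f i \<in> H"
  shows "finsum R f A \<in> H"
proof (cases "finite A")
  case True
  then show ?thesis
    using f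
  proof (induction A rule: finite_induct)
    case (insert a A)
    then have "f \<in> insert a A \<rightarrow> carrier R"
      using additive_subgroup.a_subset[OF H] by blast
    with insert show ?case
      using H by (simp add: finsum_insert additive_subgroup.a_closed)
  qed (use H in \<open>simp add: additive_subgroup.zero_closed\<close>)
qed (use H in \<open>simp add: finsum_infinite additive_subgroup.zero_closed\<close>)

context cring
begin

declare Span.simps [simp del]

lemma Span_Nil: "Span K [] = {\<zero>}"
  by (simp add: Span.simps)

lemma Span_Cons: "Span K (u # Us) = line_extension K u (Span K Us)"
  by (simp add: Span.simps)

lemma Span_Cons_iff: "v \<in> Span K (u # Us) \<longleftrightarrow> (\<exists>k\<in>K. \<exists>w\<in>Span K Us. v = k \<otimes> u \<oplus> w)"
  by (simp add: Span_Cons line_extension_mem_iff)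

lemma subring_cring: "subring K R \<Longrightarrow> cring (R\<lparr>carrier := K\<rparr>)"
  using subcring_iff subcringI' subringE(1) by blast

context
  fixes K assumes K: "subring K R"
begin

lemma submodule_overI:
  assumes "N \<subseteq> carrier R" "\<zero> \<in> N" "\<And>a b. a \<in> N \<Longrightarrow> b \<in> N \<Longrightarrow> a \<oplus> b \<in> N"
    and smult: "\<And>k v. k \<in> K \<Longrightarrow> v \<in> N \<Longrightarrow> k \<otimes> v \<in> N"
  shows "submodule_over R K N"
proof -
  have "\<ominus> v \<in> N" if "v \<in> N" for v
  proof -
    have "\<ominus> v = \<ominus> \<one> \<otimes> v"
      using that assms(1) by (auto simp: l_minus)
    then show ?thesis
      using smult[OF subringE(5)[OF K subringE(3)[OF K]] that] by simp
  qed
  then have "additive_subgroup N R"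
    using assms(1-3) by (intro additive_subgroupI add.subgroupI) auto
  with smult show ?thesis
    by (simp add: submodule_over_def)
qed

lemma submodule_line_extension:
  assumes W: "submodule_over R K W" and u: "u \<in> carrier R"
  shows "submodule_over R K (line_extension K u W)"
proof -
  have W_sub: "additive_subgroup W R" and W_smult: "\<And>k w. k \<in> K \<Longrightarrow> w \<in> W \<Longrightarrow> k \<otimes> w \<in> W"
    using W by (auto simp: submodule_over_def)
  have Kc: "K \<subseteq> carrier R" and Wc: "W \<subseteq> carrier R"
    using subringE(1)[OF K] additive_subgroup.a_subset[OF W_sub] .
  show ?thesis
  proof (rule submodule_overI)
    show "line_extension K u W \<subseteq> carrier R"
      using line_extension_in_carrier[OF Kc u Wc] .
    have "\<zero> = \<zero> \<otimes> u \<oplus> \<zero>"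
      using u by simp
    then show "\<zero> \<in> line_extension K u W"
      unfolding line_extension_mem_iff
      using subringE(2)[OF K] additive_subgroup.zero_closed[OF W_sub] by blast
  next
    fix a b assume "a \<in> line_extension K u W" "b \<in> line_extension K u W"
    then obtain k w l x where kw: "k \<in> K" "w \<in> W" "a = k \<otimes> u \<oplus> w"
      and lx: "l \<in> K" "x \<in> W" "b = l \<otimes> u \<oplus> x"
      by (auto simp: line_extension_mem_iff)
    then have "a \<oplus> b = (k \<oplus> l) \<otimes> u \<oplus> (w \<oplus> x)"
      using u Kc Wc by (simp add: l_distr a_ac subsetD)
    moreover have "k \<oplus> l \<in> K" "w \<oplus> x \<in> W"
      using kw lx subringE(7)[OF K] additive_subgroup.a_closed[OF W_sub] by auto
    ultimately show "a \<oplus> b \<in> line_extension K u W"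
      unfolding line_extension_mem_iff by blast
  next
    fix c a assume c: "c \<in> K" and "a \<in> line_extension K u W"
    then obtain k w where kw: "k \<in> K" "w \<in> W" "a = k \<otimes> u \<oplus> w"
      by (auto simp: line_extension_mem_iff)
    then have "c \<otimes> a = (c \<otimes> k) \<otimes> u \<oplus> c \<otimes> w"
      using c u Kc Wc by (simp add: r_distr m_assoc subsetD)
    moreover have "c \<otimes> k \<in> K" "c \<otimes> w \<in> W"
      using c kw subringE(6)[OF K] W_smult by auto
    ultimately show "c \<otimes> a \<in> line_extension K u W"
      unfolding line_extension_mem_iff by blast
  qed
qed

lemma Span_submodule: "set Us \<subseteq> carrier R \<Longrightarrow> submodule_over R K (Span K Us)"
proof (induction Us)
  case Nil
  show ?case
    using subringE(1)[OF K] by (intro submodule_overI) (auto simp: Span_Nil)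
next
  case (Cons u Us)
  then show ?case
    using submodule_line_extension by (simp add: Span_Cons)
qed

lemma Span_subgroup:
  "set Us \<subseteq> carrier R \<Longrightarrow> additive_subgroup (Span K Us) R"
  using Span_submodule by (simp add: submodule_over_def)

lemma Span_smult_closed_subring:
  "set Us \<subseteq> carrier R \<Longrightarrow> k \<in> K \<Longrightarrow> v \<in> Span K Us \<Longrightarrow> k \<otimes> v \<in> Span K Us"
  using Span_submodule by (simp add: submodule_over_def)

lemma Span_carrier: "set Us \<subseteq> carrier R \<Longrightarrow> Span K Us \<subseteq> carrier R"
  using Span_subgroup additive_subgroup.a_subset by blast

lemma set_subset_Span: "set Us \<subseteq> carrier R \<Longrightarrow> set Us \<subseteq> Span K Us"
proof (induction Us)
  case (Cons u Us)
  then have u: "u \<in> carrier R" and Us: "set Us \<subseteq> carrier R"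
    by auto
  have "u = \<one> \<otimes> u \<oplus> \<zero>"
    using u by simp
  then have "u \<in> Span K (u # Us)"
    using subringE(3)[OF K] additive_subgroup.zero_closed[OF Span_subgroup[OF Us]]
    by (auto simp: Span_Cons_iff)
  moreover have "v \<in> Span K (u # Us)" if "v \<in> set Us" for v
  proof -
    have "v = \<zero> \<otimes> u \<oplus> v"
      using u that Us by auto
    then show ?thesis
      using subringE(2)[OF K] Cons.IH Us that by (auto simp: Span_Cons_iff)
  qed
  ultimately show ?case
    by auto
qed simp

lemma Span_mult_subset:
  assumes c: "c \<in> carrier R" and Us: "set Us \<subseteq> carrier R" and Vs: "set Vs \<subseteq> carrier R"
    and gens: "\<And>u. u \<in> set Us \<Longrightarrow> c \<otimes> u \<in> Span K Vs"
    and v: "v \<in> Span K Us"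
  shows "c \<otimes> v \<in> Span K Vs"
  using Us gens v
proof (induction Us arbitrary: v)
  case Nil
  then show ?case
    using c additive_subgroup.zero_closed[OF Span_subgroup[OF Vs]] by (simp add: Span_Nil)
next
  case (Cons u Us)
  then obtain k w where kw: "k \<in> K" "w \<in> Span K Us" "v = k \<otimes> u \<oplus> w"
    by (auto simp: Span_Cons_iff)
  have carr: "k \<in> carrier R" "u \<in> carrier R" "w \<in> carrier R"
    using kw Cons.prems subringE(1)[OF K] Span_carrier[of Us] by auto
  then have "c \<otimes> v = k \<otimes> (c \<otimes> u) \<oplus> c \<otimes> w"
    using c kw(3) by (simp add: r_distr m_lcomm)
  moreover have "k \<otimes> (c \<otimes> u) \<in> Span K Vs" "c \<otimes> w \<in> Span K Vs"
    using Span_smult_closed_subring[OF Vs kw(1)] Cons kw(2) by auto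
  ultimately show ?case
    using additive_subgroup.a_closed[OF Span_subgroup[OF Vs]] by simp
qed

lemma Span_mult_Span:
  assumes Us: "set Us \<subseteq> carrier R" and Vs: "set Vs \<subseteq> carrier R"
    and a: "a \<in> Span K Us" and b: "b \<in> Span K Vs"
  shows "a \<otimes> b \<in> Span K [u \<otimes> v. u \<leftarrow> Us, v \<leftarrow> Vs]"
proof -
  let ?Ws = "[u \<otimes> v. u \<leftarrow> Us, v \<leftarrow> Vs]"
  have Ws: "set ?Ws \<subseteq> carrier R"
    using Us Vs by auto
  have "v \<otimes> a \<in> Span K ?Ws" if v: "v \<in> set Vs" for v
  proof (rule Span_mult_subset[OF _ Us Ws _ a])
    show vc: "v \<in> carrier R"
      using v Vs by auto
    fix u assume u: "u \<in> set Us"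
    then have "u \<otimes> v \<in> Span K ?Ws"
      using v set_subset_Span[OF Ws] by auto
    moreover have "v \<otimes> u = u \<otimes> v"
      using u vc Us m_comm by auto
    ultimately show "v \<otimes> u \<in> Span K ?Ws"
      by simp
  qed
  moreover have ac: "a \<in> carrier R"
    using a Span_carrier[OF Us] by auto
  ultimately have "a \<otimes> v \<in> Span K ?Ws" if "v \<in> set Vs" for v
    using that Vs m_comm[OF ac, of v] by auto
  then show ?thesis
    by (rule Span_mult_subset[OF ac Vs Ws _ b])
qed

lemma integral_power_in_Span:
  fixes d :: nat
  assumes e: "e \<in> carrier R" and c: "\<forall>i<d. c i \<in> K"
    and eq: "e [^] d \<oplus> (\<Oplus>i\<in>{..<d}. c i \<otimes> e [^] i) = \<zero>"
  shows "e [^] d \<in> Span K (map (\<lambda>i. e [^] i) [0..<d])"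
proof -
  let ?Us = "map (\<lambda>i. e [^] i) [0..<d]"
  have Us: "set ?Us \<subseteq> carrier R"
    using e by auto
  note W = Span_subgroup[OF Us]
  have "e [^] i \<in> Span K ?Us" if "i < d" for i
    using set_subset_Span[OF Us] that by auto
  then have sum: "(\<Oplus>i\<in>{..<d}. c i \<otimes> e [^] i) \<in> Span K ?Us"
    using c Span_smult_closed_subring[OF Us] by (intro finsum_additive_subgroup[OF W]) auto
  have "c i \<in> carrier R" if "i < d" for i
    using c that subringE(1)[OF K] by blast
  then have "\<ominus> (\<Oplus>i\<in>{..<d}. c i \<otimes> e [^] i) = e [^] d"
    using eq e by (intro minus_equality) (auto intro: finsum_closed)
  then show ?thesis
    using additive_subgroup.a_inv_closed[OF W sum] by simp
qed

lemma integral_imp_Span_stable: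
  fixes d :: nat
  assumes e: "e \<in> carrier R" and c: "\<forall>i<d. c i \<in> K"
    and eq: "e [^] d \<oplus> (\<Oplus>i\<in>{..<d}. c i \<otimes> e [^] i) = \<zero>"
  shows "\<exists>Us. set Us \<subseteq> carrier R \<and> \<one> \<in> Span K Us \<and> (\<forall>w\<in>Span K Us. e \<otimes> w \<in> Span K Us)"
proof -
  define Us where "Us = map (\<lambda>i. e [^] i) [0..<d]"
  have Us: "set Us \<subseteq> carrier R"
    using e by (auto simp: Us_def)
  have pw: "e [^] i \<in> Span K Us" if "i \<le> d" for i
  proof (cases "i = d")
    case True
    then show ?thesis
      using integral_power_in_Span[OF e c eq] by (simp add: Us_def)
  next
    case False
    then show ?thesis
      using set_subset_Span[OF Us] that by (auto simp: Us_def)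
  qed
  have "\<one> \<in> Span K Us"
    using pw[of 0] by simp
  moreover have "e \<otimes> w \<in> Span K Us" if "w \<in> Span K Us" for w
  proof (rule Span_mult_subset[OF e Us Us _ that])
    fix u assume "u \<in> set Us"
    then obtain i where i: "i < d" "u = e [^] i"
      by (auto simp: Us_def)
    then have "e \<otimes> u = e [^] Suc i"
      using e by (simp add: m_comm)
    with pw[of "Suc i"] i(1) show "e \<otimes> u \<in> Span K Us"
      by simp
  qed
  ultimately show ?thesis
    using Us by blast
qed

lemma Span_product_stable:
  assumes Xs: "set Xs \<subseteq> carrier R" and Ys: "set Ys \<subseteq> carrier R" and f: "f \<in> carrier R"
    and stable: "(\<forall>w\<in>Span K Xs. f \<otimes> w \<in> Span K Xs) \<or> (\<forall>w\<in>Span K Ys. f \<otimes> w \<in> Span K Ys)"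
    and w: "w \<in> Span K [x \<otimes> y. x \<leftarrow> Xs, y \<leftarrow> Ys]"
  shows "f \<otimes> w \<in> Span K [x \<otimes> y. x \<leftarrow> Xs, y \<leftarrow> Ys]"
proof -
  have Zs: "set [x \<otimes> y. x \<leftarrow> Xs, y \<leftarrow> Ys] \<subseteq> carrier R"
    using Xs Ys by auto
  show ?thesis
  proof (rule Span_mult_subset[OF f Zs Zs _ w])
  fix z assume "z \<in> set [x \<otimes> y. x \<leftarrow> Xs, y \<leftarrow> Ys]"
  then obtain x y where xy: "x \<in> set Xs" "y \<in> set Ys" "z = x \<otimes> y"
    by auto
  have x: "x \<in> Span K Xs" and y: "y \<in> Span K Ys"
    using xy set_subset_Span Xs Ys by blast+
  have xyc: "x \<in> carrier R" "y \<in> carrier R"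
    using xy Xs Ys by auto
  from stable show "f \<otimes> z \<in> Span K [x \<otimes> y. x \<leftarrow> Xs, y \<leftarrow> Ys]"
  proof
    assume "\<forall>w\<in>Span K Xs. f \<otimes> w \<in> Span K Xs"
    moreover have "f \<otimes> z = (f \<otimes> x) \<otimes> y"
      using xy(3) xyc f by (simp add: m_assoc)
    ultimately show ?thesis
      using Span_mult_Span[OF Xs Ys _ y] x by simp
  next
    assume "\<forall>w\<in>Span K Ys. f \<otimes> w \<in> Span K Ys"
    moreover have "f \<otimes> z = x \<otimes> (f \<otimes> y)"
      using xy(3) xyc f by (simp add: m_lcomm)
    ultimately show ?thesis
      using Span_mult_Span[OF Xs Ys x] y by simp
  qed
  qed
qed

lemma integral_finite_Span_stable:
  assumes integral: "integral_over R K" and E: "finite E" "E \<subseteq> carrier R"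
  shows "\<exists>Us. set Us \<subseteq> carrier R \<and> \<one> \<in> Span K Us \<and> (\<forall>e\<in>E. \<forall>w\<in>Span K Us. e \<otimes> w \<in> Span K Us)"
  using E
proof (induction E rule: finite_induct)
  case empty
  have "\<one> \<in> Span K [\<one>]"
    using set_subset_Span[of "[\<one>]"] by simp
  then show ?case
    by (intro exI[where x = "[\<one>]"]) simp
next
  case (insert e F)
  then have e: "e \<in> carrier R"
    by simp
  obtain Xs where Xs: "set Xs \<subseteq> carrier R" "\<one> \<in> Span K Xs"
    and Xs_stable: "\<forall>f\<in>F. \<forall>w\<in>Span K Xs. f \<otimes> w \<in> Span K Xs"
    using insert by auto
  obtain Ys where Ys: "set Ys \<subseteq> carrier R" "\<one> \<in> Span K Ys"
    and Ys_stable: "\<forall>w\<in>Span K Ys. e \<otimes> w \<in> Span K Ys"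
    using integral e integral_imp_Span_stable unfolding integral_over_def by meson
  have "\<one> \<otimes> \<one> \<in> Span K [x \<otimes> y. x \<leftarrow> Xs, y \<leftarrow> Ys]"
    by (rule Span_mult_Span[OF Xs(1) Ys(1) Xs(2) Ys(2)])
  moreover have "\<forall>f\<in>insert e F. \<forall>w\<in>Span K [x \<otimes> y. x \<leftarrow> Xs, y \<leftarrow> Ys].
      f \<otimes> w \<in> Span K [x \<otimes> y. x \<leftarrow> Xs, y \<leftarrow> Ys]"
    using Span_product_stable[OF Xs(1) Ys(1)] Xs_stable Ys_stable insert.prems by auto
  ultimately show ?case
    using Xs(1) Ys(1) by (intro exI[where x = "[x \<otimes> y. x \<leftarrow> Xs, y \<leftarrow> Ys]"]) auto
qed

lemma generate_ring_subset_Span: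
  assumes integral: "integral_over R K" and E: "finite E" "E \<subseteq> carrier R"
  shows "\<exists>Us. set Us \<subseteq> carrier R \<and> generate_ring R (K \<union> E) \<subseteq> Span K Us"
proof -
  obtain Us where Us: "set Us \<subseteq> carrier R" "\<one> \<in> Span K Us"
    and closed: "\<forall>e\<in>E. \<forall>w\<in>Span K Us. e \<otimes> w \<in> Span K Us"
    using integral_finite_Span_stable[OF integral E] by blast
  note W = Span_subgroup[OF Us(1)]
  have Wc: "Span K Us \<subseteq> carrier R"
    using Span_carrier[OF Us(1)] .
  define T where "T = {r \<in> carrier R. \<forall>w\<in>Span K Us. r \<otimes> w \<in> Span K Us}"
  have "subring T R"
  proof (rule subringI)
    show "T \<subseteq> carrier R" "\<one> \<in> T"
      using Wc by (auto simp: T_def)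
  next
    fix h assume "h \<in> T"
    then show "\<ominus> h \<in> T"
      using Wc additive_subgroup.a_inv_closed[OF W] by (auto simp: T_def l_minus subsetD)
  next
    fix h1 h2 assume "h1 \<in> T" "h2 \<in> T"
    then show "h1 \<otimes> h2 \<in> T" "h1 \<oplus> h2 \<in> T"
      using Wc additive_subgroup.a_closed[OF W] by (auto simp: T_def m_assoc l_distr subsetD)
  qed
  moreover have "K \<union> E \<subseteq> T"
    using subringE(1)[OF K] Span_smult_closed_subring[OF Us(1)] closed E(2) by (auto simp: T_def)
  ultimately have "generate_ring R (K \<union> E) \<subseteq> T"
    using generate_ring_min_subring1 subringE(1)[OF K] E(2) by (metis Un_subset_iff)
  moreover have "T \<subseteq> Span K Us"
    using Us(2) by (auto simp: T_def dest: bspec[where x = \<one>])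
  ultimately show ?thesis
    using Us(1) by blast
qed

lemma submodule_over_Int:
  assumes "submodule_over R K A" "submodule_over R K B"
  shows "submodule_over R K (A \<inter> B)"
proof (rule submodule_overI)
  show "A \<inter> B \<subseteq> carrier R"
    using assms by (auto simp: submodule_over_def dest: additive_subgroup.a_subset)
qed (use assms in \<open>auto simp: submodule_over_def additive_subgroup.zero_closed
  additive_subgroup.a_closed\<close>)

lemma coefficient_ideal:
  assumes N: "submodule_over R K N" and Q: "submodule_over R K Q" and u: "u \<in> carrier R"
  shows "ideal {a \<in> K. \<exists>y\<in>Q. a \<otimes> u \<oplus> y \<in> N} (R\<lparr>carrier := K\<rparr>)"
proof (rule cring.cring_idealI[OF subring_cring[OF K]], goal_cases)
  case 1
  show ?case
    by auto
next
  case 2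
  have "\<zero> \<otimes> u \<oplus> \<zero> \<in> N"
    using u N by (simp add: submodule_over_def additive_subgroup.zero_closed)
  then show ?case
    using subringE(2)[OF K] Q by (auto simp: submodule_over_def additive_subgroup.zero_closed)
next
  case (3 a b)
  then obtain y z where yz: "a \<in> K" "y \<in> Q" "a \<otimes> u \<oplus> y \<in> N" "b \<in> K" "z \<in> Q" "b \<otimes> u \<oplus> z \<in> N"
    by auto
  have carr: "a \<in> carrier R" "b \<in> carrier R" "y \<in> carrier R" "z \<in> carrier R"
    using yz subringE(1)[OF K] Q by (auto simp: submodule_over_def dest: additive_subgroup.a_subset)
  have "(a \<oplus> b) \<otimes> u \<oplus> (y \<oplus> z) = (a \<otimes> u \<oplus> y) \<oplus> (b \<otimes> u \<oplus> z)"
    using carr u by (simp add: l_distr a_ac)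
  then have "(a \<oplus> b) \<otimes> u \<oplus> (y \<oplus> z) \<in> N"
    using yz N by (simp add: submodule_over_def additive_subgroup.a_closed)
  moreover have "a \<oplus> b \<in> K" "y \<oplus> z \<in> Q"
    using yz subringE(7)[OF K] Q by (auto simp: submodule_over_def additive_subgroup.a_closed)
  ultimately show ?case
    by auto
next
  case (4 a r)
  then obtain y where y: "a \<in> K" "y \<in> Q" "a \<otimes> u \<oplus> y \<in> N" and r: "r \<in> K"
    by auto
  have carr: "a \<in> carrier R" "r \<in> carrier R" "y \<in> carrier R"
    using y r subringE(1)[OF K] Q by (auto simp: submodule_over_def dest: additive_subgroup.a_subset)
  have "(r \<otimes> a) \<otimes> u \<oplus> r \<otimes> y = r \<otimes> (a \<otimes> u \<oplus> y)"
    using carr u by (simp add: r_distr m_assoc)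
  then have "(r \<otimes> a) \<otimes> u \<oplus> r \<otimes> y \<in> N"
    using y r N by (simp add: submodule_over_def)
  moreover have "r \<otimes> a \<in> K" "r \<otimes> y \<in> Q"
    using y r subringE(6)[OF K] Q by (auto simp: submodule_over_def)
  ultimately show ?case
    by auto
qed

lemma Span_Cons_subset_set_add:
  assumes Us: "set (u # Us) \<subseteq> carrier R" and A: "A \<subseteq> Span K (u # Us)"
    and coeffs: "{a \<in> K. \<exists>y\<in>Span K Us. a \<otimes> u \<oplus> y \<in> A} \<subseteq> {a \<in> K. \<exists>y\<in>Span K Us. a \<otimes> u \<oplus> y \<in> B}"
  shows "A \<subseteq> B <+>\<^bsub>R\<^esub> Span K Us"
proof
  fix z assume z: "z \<in> A"
  then have "z \<in> Span K (u # Us)"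
    using A by blast
  then obtain a y where ay: "a \<in> K" "y \<in> Span K Us" "z = a \<otimes> u \<oplus> y"
    by (auto simp: Span_Cons_iff)
  then obtain y' where y': "y' \<in> Span K Us" "a \<otimes> u \<oplus> y' \<in> B"
    using coeffs z by blast
  have "a \<in> carrier R" "y \<in> carrier R" "y' \<in> carrier R" "u \<in> carrier R"
    using ay y' subringE(1)[OF K] Span_carrier Us by auto
  then have z_eq: "z = (a \<otimes> u \<oplus> y') \<oplus> (\<ominus> y' \<oplus> y)"
    using ay(3) by (simp add: a_assoc r_neg2)
  have y_diff: "\<ominus> y' \<oplus> y \<in> Span K Us"
    using Span_subgroup y' ay Us
    by (simp add: additive_subgroup.a_closed additive_subgroup.a_inv_closed)
  show "z \<in> B <+>\<^bsub>R\<^esub> Span K Us"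
    unfolding z_eq set_add_def' by (rule UN_I[OF y'(2)], rule UN_I[OF y_diff], simp)
qed

lemma Span_submodules_acc:
  fixes N :: "nat \<Rightarrow> 'a set"
  assumes noeth: "noetherian (R\<lparr>carrier := K\<rparr>)" and Us: "set Us \<subseteq> carrier R"
    and N: "\<And>k. submodule_over R K (N k)" "\<And>k. N k \<subseteq> Span K Us" "mono N"
  shows "\<exists>m. \<forall>k\<ge>m. N k = N m"
  using Us N
proof (induction Us arbitrary: N)
  case Nil
  have "\<zero> \<in> N k" for k
    using Nil.prems(2)[of k] additive_subgroup.zero_closed[of "N k" R]
    by (simp add: submodule_over_def)
  then have "N k = {\<zero>}" for k
    using Nil.prems(3) by (auto simp: Span_Nil)
  then show ?case
    by simp
next
  case (Cons u Us)
  let ?Q = "Span K Us"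
  let ?I = "\<lambda>k. {a \<in> K. \<exists>y\<in>?Q. a \<otimes> u \<oplus> y \<in> N k}"
  have u: "u \<in> carrier R" and Us: "set Us \<subseteq> carrier R"
    using Cons.prems(1) by auto
  have Q: "submodule_over R K ?Q"
    using Span_submodule[OF Us] .
  have "\<exists>m. \<forall>k\<ge>m. N k \<inter> ?Q = N m \<inter> ?Q"
  proof (rule Cons.IH[OF Us])
    show "mono (\<lambda>k. N k \<inter> ?Q)"
      using Cons.prems(4) by (auto simp: mono_def)
  qed (use submodule_over_Int Cons.prems(2) Q in auto)
  then obtain m1 where m1: "\<forall>k\<ge>m1. N k \<inter> ?Q = N m1 \<inter> ?Q" ..
  have "ideal (?I k) (R\<lparr>carrier := K\<rparr>)" for k
    by (rule coefficient_ideal[OF Cons.prems(2) Q u])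
  moreover have "?I k \<subseteq> ?I (Suc k)" for k
    using monoD[OF Cons.prems(4), of k "Suc k"] by auto
  ultimately obtain m2 where m2: "\<forall>k\<ge>m2. ?I k = ?I m2"
    using noeth[unfolded noetherian_def, rule_format, of ?I] by blast
  have "\<forall>k\<ge>m2. N k \<subseteq> N m2 <+>\<^bsub>R\<^esub> ?Q"
  proof (intro allI impI)
    fix k assume "m2 \<le> k"
    then have "?I k = ?I m2"
      using m2 by blast
    then show "N k \<subseteq> N m2 <+>\<^bsub>R\<^esub> ?Q"
      using Span_Cons_subset_set_add[OF Cons.prems(1) Cons.prems(3)] by blast
  qed
  moreover have "additive_subgroup (N k) R" for k
    using Cons.prems(2) by (simp add: submodule_over_def)
  ultimately show ?case
    using chain_stabilizes_modular[OF _ Cons.prems(4) Span_carrier[OF Us] m1] by blast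
qed

end

end

section \<open>Artinian power series\<close>

lemma not_noetherian_escaping_seq:
  fixes R :: "('a, 'b) ring_scheme"
  assumes "\<not> noetherian R"
  obtains I :: "nat \<Rightarrow> 'a set" and s :: "nat \<Rightarrow> 'a"
  where "\<And>k. ideal (I k) R" "mono I" "\<And>m. s m \<in> (\<Union>k. I k)" "\<And>m. s m \<notin> I m"
proof -
  obtain I where I: "\<And>k. ideal (I k) R" "\<And>k. I k \<subseteq> I (Suc k)"
    and unstable: "\<not> (\<exists>m. \<forall>k\<ge>m. I k = I m)"
    using assms unfolding noetherian_def by blast
  have "mono I"
    using I(2) by (simp add: mono_iff_le_Suc)
  have "\<exists>x. x \<in> (\<Union>k. I k) \<and> x \<notin> I m" for m
  proof -
    obtain k where "k \<ge> m" "I k \<noteq> I m"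
      using unstable by blast
    then show ?thesis
      using monoD[OF \<open>mono I\<close>] by blast
  qed
  then obtain s where "\<And>m. s m \<in> (\<Union>k. I k)" "\<And>m. s m \<notin> I m"
    by metis
  with I(1) \<open>mono I\<close> show ?thesis
    by (rule that)
qed

lemma noetherian_surj_hom_image:
  fixes R :: "('a, 'b) ring_scheme" and S :: "('c, 'd) ring_scheme"
  assumes h: "ring_hom_ring S R h" and surj: "h ` carrier S = carrier R"
    and noeth: "noetherian S"
  shows "noetherian R"
  unfolding noetherian_def
proof (intro allI impI)
  fix I :: "nat \<Rightarrow> 'a set"
  assume I: "(\<forall>k. ideal (I k) R) \<and> (\<forall>k. I k \<subseteq> I (Suc k))"
  define J where "J k = {x \<in> carrier S. h x \<in> I k}" for k
  have "ideal (J k) S" for k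
    using ring_hom_ring.ideal_vimage[OF h] I by (simp add: J_def)
  moreover have "J k \<subseteq> J (Suc k)" for k
    using I by (auto simp: J_def)
  ultimately obtain m where m: "\<forall>k\<ge>m. J k = J m"
    using noeth[unfolded noetherian_def, rule_format, of J] by blast
  have "I k = h ` J k" for k
  proof
    show "I k \<subseteq> h ` J k"
    proof
      fix y assume y: "y \<in> I k"
      then have "y \<in> h ` carrier S"
        using ideal.Icarr[of "I k" R y] I surj by simp
      then obtain x where "x \<in> carrier S" "y = h x"
        by blast
      with y show "y \<in> h ` J k"
        by (auto simp: J_def)
    qed
  qed (auto simp: J_def)
  with m have "I k = I m" if "k \<ge> m" for k
    using that by metis
  then show "\<exists>m. \<forall>k\<ge>m. I k = I m"
    by blast
qed

context cring
begin

lemma artinian_PS_iff: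
  "f \<in> artinian_PS R R0 n \<longleftrightarrow>
     f \<in> carrier (PS R n) \<and> (\<exists>E. finite E \<and> E \<subseteq> carrier R \<and> range f \<subseteq> generate_ring R (R0 \<union> E))"
  unfolding artinian_PS_def fg_family_def image_subset_iff by blast

lemma subring_finsum_closed:
  "subring H R \<Longrightarrow> (\<And>i. i \<in> A \<Longrightarrow> f i \<in> H) \<Longrightarrow> finsum R f A \<in> H"
  using finsum_additive_subgroup additive_subgroupI subring.axioms(1) by metis

lemma artinian_PS_closed:
  assumes R0: "subring R0 R" and f: "f \<in> artinian_PS R R0 n" and g: "g \<in> artinian_PS R R0 n"
    and h: "h \<in> carrier (PS R n)"
    and coeffs: "\<And>G. subring G R \<Longrightarrow> range f \<subseteq> G \<Longrightarrow> range g \<subseteq> G \<Longrightarrow> range h \<subseteq> G"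
  shows "h \<in> artinian_PS R R0 n"
proof -
  obtain E1 E2 where E: "finite E1" "E1 \<subseteq> carrier R" "finite E2" "E2 \<subseteq> carrier R"
    and range: "range f \<subseteq> generate_ring R (R0 \<union> E1)" "range g \<subseteq> generate_ring R (R0 \<union> E2)"
    using f g by (auto simp: artinian_PS_iff)
  let ?G = "generate_ring R (R0 \<union> (E1 \<union> E2))"
  have R0c: "R0 \<union> (E1 \<union> E2) \<subseteq> carrier R"
    using subringE(1)[OF R0] E by auto
  have "R0 \<union> E1 \<subseteq> R0 \<union> (E1 \<union> E2)" "R0 \<union> E2 \<subseteq> R0 \<union> (E1 \<union> E2)"
    by auto
  then have "range f \<subseteq> ?G" "range g \<subseteq> ?G"
    using range mono_generate_ring[OF _ R0c] by (meson order_trans)+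
  then have "range h \<subseteq> ?G"
    by (rule coeffs[OF generate_ring_is_subring[OF R0c]])
  then show ?thesis
    using h E by (auto simp: artinian_PS_iff)
qed

lemma artinian_PS_subring:
  assumes R0: "subring R0 R"
  shows "subring (artinian_PS R R0 n) (PS R n)"
proof -
  interpret P: cring "PS R n"
    by (rule PS_cring)
  show ?thesis
  proof (rule P.subringI)
    show "artinian_PS R R0 n \<subseteq> carrier (PS R n)"
      by (auto simp: artinian_PS_iff)
    have "range (\<one>\<^bsub>PS R n\<^esub>) \<subseteq> generate_ring R (R0 \<union> {})"
      by (auto simp: PS_one generate_ring.one zero_in_generate)
    then show "\<one>\<^bsub>PS R n\<^esub> \<in> artinian_PS R R0 n"
      using P.one_closed by (auto simp: artinian_PS_iff intro!: exI[where x = "{}"])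
  next
    fix f assume f: "f \<in> artinian_PS R R0 n"
    then have fc: "f \<in> carrier (PS R n)"
      by (simp add: artinian_PS_iff)
    show "\<ominus>\<^bsub>PS R n\<^esub> f \<in> artinian_PS R R0 n"
    proof (rule artinian_PS_closed[OF R0 f f P.a_inv_closed[OF fc]])
      fix G assume G: "subring G R" "range f \<subseteq> G"
      then show "range (\<ominus>\<^bsub>PS R n\<^esub> f) \<subseteq> G"
        using range_subsetD[OF G(2)] subringE(5)[OF G(1)] by (auto simp: PS_a_inv[OF fc])
    qed
  next
    fix f g assume f: "f \<in> artinian_PS R R0 n" and g: "g \<in> artinian_PS R R0 n"
    then have fc: "f \<in> carrier (PS R n)" and gc: "g \<in> carrier (PS R n)"
      by (simp_all add: artinian_PS_iff)
    show "f \<otimes>\<^bsub>PS R n\<^esub> g \<in> artinian_PS R R0 n"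
    proof (rule artinian_PS_closed[OF R0 f g P.m_closed[OF fc gc]])
      fix G assume G: "subring G R" "range f \<subseteq> G" "range g \<subseteq> G"
      then have "f m \<otimes> g m' \<in> G" for m m'
        using subringE(6)[OF G(1)] by (simp add: range_subsetD)
      then show "range (f \<otimes>\<^bsub>PS R n\<^esub> g) \<subseteq> G"
        using subringE(2)[OF G(1)] by (auto simp: PS_mult intro!: subring_finsum_closed[OF G(1)])
    qed
    show "f \<oplus>\<^bsub>PS R n\<^esub> g \<in> artinian_PS R R0 n"
    proof (rule artinian_PS_closed[OF R0 f g P.a_closed[OF fc gc]])
      fix G assume G: "subring G R" "range f \<subseteq> G" "range g \<subseteq> G"
      then show "range (f \<oplus>\<^bsub>PS R n\<^esub> g) \<subseteq> G"
        using subringE(7)[OF G(1)] by (auto simp: PS_add range_subsetD)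
    qed
  qed
qed

lemma PS_const_coeff_hom:
  assumes S: "subring S (PS R n)"
  shows "ring_hom_ring ((PS R n)\<lparr>carrier := S\<rparr>) R (\<lambda>f. f (\<lambda>i. 0))"
proof -
  interpret P: cring "PS R n"
    by (rule PS_cring)
  have "S \<subseteq> carrier (PS R n)"
    using subringE(1)[OF S] .
  then show ?thesis
    by (intro ring_hom_ringI P.subring_is_ring[OF S] ring_axioms)
      (auto simp: PS_coeff_closed PS_mult_const_coeff PS_add PS_one subset_iff)
qed

lemma PS_const_in_artinian_PS:
  assumes "c \<in> carrier R"
  shows "(\<lambda>m. if m = (\<lambda>i. 0) then c else \<zero>) \<in> artinian_PS R R0 n"
proof -
  have "range (\<lambda>m. if m = (\<lambda>i. 0) then c else \<zero>) \<subseteq> generate_ring R (R0 \<union> {c})"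
    by (auto intro: generate_ring.incl zero_in_generate)
  then show ?thesis
    using assms by (auto simp: artinian_PS_iff PS_carrier intro!: exI[where x = "{c}"])
qed

lemma artinian_PS_not_noetherian:
  assumes R0: "subring R0 R" and not_noeth: "\<not> noetherian R"
  shows "\<not> noetherian ((PS R n)\<lparr>carrier := artinian_PS R R0 n\<rparr>)"
proof
  assume "noetherian ((PS R n)\<lparr>carrier := artinian_PS R R0 n\<rparr>)"
  moreover have "(\<lambda>f. f (\<lambda>i. 0)) ` artinian_PS R R0 n = carrier R"
  proof
    show "(\<lambda>f. f (\<lambda>i. 0)) ` artinian_PS R R0 n \<subseteq> carrier R"
      by (auto simp: artinian_PS_iff PS_coeff_closed)
    show "carrier R \<subseteq> (\<lambda>f. f (\<lambda>i. 0)) ` artinian_PS R R0 n"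
    proof
      fix c assume "c \<in> carrier R"
      then show "c \<in> (\<lambda>f. f (\<lambda>i. 0)) ` artinian_PS R R0 n"
        by (intro image_eqI[where x = "\<lambda>m. if m = (\<lambda>i. 0) then c else \<zero>"] PS_const_in_artinian_PS) auto
    qed
  qed
  ultimately have "noetherian R"
    using noetherian_surj_hom_image[OF PS_const_coeff_hom[OF artinian_PS_subring[OF R0]]] by simp
  with not_noeth show False ..
qed

lemma fg_family_ideal_chain_stabilizes:
  fixes I :: "nat \<Rightarrow> 'a set"
  assumes R0: "subring R0 R" and integral: "integral_over R R0"
    and noeth: "noetherian (R\<lparr>carrier := R0\<rparr>)"
    and Ra: "Ra \<in> fg_family R R0" and I: "\<And>k. ideal (I k) R" "mono I"
  shows "\<exists>m. \<forall>k\<ge>m. I k \<inter> Ra = I m \<inter> Ra"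
proof -
  obtain E where E: "finite E" "E \<subseteq> carrier R" and Ra_eq: "Ra = generate_ring R (R0 \<union> E)"
    using Ra by (auto simp: fg_family_def)
  obtain Us where Us: "set Us \<subseteq> carrier R" "Ra \<subseteq> Span R0 Us"
    using generate_ring_subset_Span[OF R0 integral E] Ra_eq by auto
  have Ra_subring: "subring Ra R"
    using Ra_eq generate_ring_is_subring subringE(1)[OF R0] E(2) by auto
  have R0_Ra: "R0 \<subseteq> Ra"
    using Ra_eq by (auto intro: generate_ring.incl)
  have "submodule_over R R0 (I k \<inter> Ra)" for k
  proof (rule submodule_overI[OF R0])
    show "I k \<inter> Ra \<subseteq> carrier R"
      using ideal.Icarr[OF I(1)] by blast
    show "\<zero> \<in> I k \<inter> Ra"
      using additive_subgroup.zero_closed[OF ideal.axioms(1)[OF I(1)]] subringE(2)[OF Ra_subring]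
      by blast
    show "a \<oplus> b \<in> I k \<inter> Ra" if "a \<in> I k \<inter> Ra" "b \<in> I k \<inter> Ra" for a b
      using that additive_subgroup.a_closed[OF ideal.axioms(1)[OF I(1)]] subringE(7)[OF Ra_subring]
      by blast
    show "c \<otimes> v \<in> I k \<inter> Ra" if "c \<in> R0" "v \<in> I k \<inter> Ra" for c v
      using that ideal.I_l_closed[OF I(1)] subringE(1,6)[OF Ra_subring] R0_Ra by blast
  qed
  moreover have "I k \<inter> Ra \<subseteq> Span R0 Us" for k
    using Us(2) by blast
  moreover have "mono (\<lambda>k. I k \<inter> Ra)"
    using I(2) by (auto simp: mono_def)
  ultimately show ?thesis
    by (rule Span_submodules_acc[OF R0 noeth Us(1)])
qed

lemma artinian_PS_proper:
  assumes R0: "subring R0 R" and integral: "integral_over R R0"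
    and noeth: "noetherian (R\<lparr>carrier := R0\<rparr>)" and n: "n \<ge> 1"
    and not_noeth: "\<not> noetherian R"
  shows "artinian_PS R R0 n \<noteq> carrier (PS R n)"
proof
  assume eq: "artinian_PS R R0 n = carrier (PS R n)"
  obtain I :: "nat \<Rightarrow> 'a set" and s :: "nat \<Rightarrow> 'a" where I: "\<And>k. ideal (I k) R" "mono I"
    and s: "\<And>m. s m \<in> (\<Union>k. I k)" "\<And>m. s m \<notin> I m"
    using not_noetherian_escaping_seq[OF not_noeth] by blast
  text \<open>The series \<open>\<Sum>\<^sub>m s m X\<^sub>1\<^sup>m\<close>; the variable \<open>X\<^sub>1\<close> has index \<open>0\<close>.\<close>
  define f where "f t = (if \<forall>i. i \<noteq> 0 \<longrightarrow> t i = 0 then s (t 0) else \<zero>)" for t :: "nat \<Rightarrow> nat"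
  have "f \<in> carrier (PS R n)"
    unfolding PS_carrier
  proof (intro conjI allI impI)
    show "f t \<in> carrier R" for t
      using s(1)[of "t 0"] ideal.Icarr[OF I(1)] by (auto simp: f_def)
    fix t :: "nat \<Rightarrow> nat" assume "t \<notin> expvec n"
    then obtain i where "i \<ge> n" "t i \<noteq> 0"
      by (auto simp: expvec_def)
    with n show "f t = \<zero>"
      by (auto simp: f_def)
  qed
  then obtain Ra where Ra: "Ra \<in> fg_family R R0" "\<And>t. f t \<in> Ra"
    using eq unfolding artinian_PS_def by auto
  have s_Ra: "s m \<in> Ra" for m
    using Ra(2)[of "\<lambda>i. if i = 0 then m else 0"] by (simp add: f_def)
  obtain m where m: "\<forall>k\<ge>m. I k \<inter> Ra = I m \<inter> Ra"
    using fg_family_ideal_chain_stabilizes[OF R0 integral noeth Ra(1) I] by blast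
  obtain k where "s m \<in> I k"
    using s(1) by blast
  then have "s m \<in> I (max k m) \<inter> Ra"
    using monoD[OF I(2), of k "max k m"] s_Ra by auto
  then have "s m \<in> I m"
    using m by (metis IntD1 max.cobounded2)
  with s(2) show False ..
qed

end

theorem mainTheorem1:
  fixes R :: "('a, 'b) ring_scheme" and R0 :: "'a set" and n :: nat
  assumes "cring R"
    and "krull_dim_zero R"
    and "subring R0 R"
    and "artinian (R\<lparr>carrier := R0\<rparr>)"
    and "integral_over R R0"
    and "n \<ge> 1"
    and "\<not> noetherian R"
  shows "\<not> noetherian ((PS R n)\<lparr>carrier := artinian_PS R R0 n\<rparr>)
         \<and> artinian_PS R R0 n \<subset> carrier (PS R n)"
proof -
  interpret cring R
    by fact
  have "noetherian (R\<lparr>carrier := R0\<rparr>)"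
    using cring.artinian_imp_noetherian[OF subring_cring[OF assms(3)] assms(4)] .
  moreover have "artinian_PS R R0 n \<subseteq> carrier (PS R n)"
    by (auto simp: artinian_PS_iff)
  ultimately show ?thesis
    using artinian_PS_not_noetherian[OF assms(3,7)] artinian_PS_proper[OF assms(3,5) _ assms(6,7)]
    by auto
qed

end
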